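(* If a countable group $\Gamma$ admits an action on a countable set $X$ preserving a mean $\mu$ such that the action is strongly faithful with respect to $\mu$, then $\Gamma$ is sofic.
   Context: A mean on $X$ is a finitely additive $\mu:2^X\to[0,1]$ with $\mu(X)=1$; the action preserves $\mu$ if $\mu(\gamma A)=\mu(A)$ for all $\gamma\in\Gamma$, $A\subseteq X$. The action is strongly faithful if for every $\gamma\neq1$ the fixed point set $\{x:\gamma x=x\}$ has $\mu$-measure less than $1$. $\Gamma$ is sofic if for every finite $F\subseteq\Gamma$ and $\varepsilon>0$ there are a finite set $V$ and a map $\phi:\Gamma\to\mathrm{Sym}(V)$ such that for all $g,h\in F$, $|\{v:\phi(gh)v=\phi(g)\phi(h)v\}|\ge(1-\varepsilon)|V|$, and for all $g\in F\setminus\{1\}$, $|\{v:\phi(g)v\neq v\}|\ge(1-\varepsilon)|V|$. *)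

theory Defs
  imports Complex_Main "HOL-Library.Countable_Set" "HOL-Algebra.Group_Action"
begin

definition is_mean :: "'b set \<Rightarrow> ('b set \<Rightarrow> real) \<Rightarrow> bool" where
  "is_mean X \<mu> \<longleftrightarrow>
     (\<forall>A. A \<subseteq> X \<longrightarrow> 0 \<le> \<mu> A \<and> \<mu> A \<le> 1) \<and>
     (\<forall>A B. A \<subseteq> X \<longrightarrow> B \<subseteq> X \<longrightarrow> A \<inter> B = {} \<longrightarrow> \<mu> (A \<union> B) = \<mu> A + \<mu> B) \<and>
     \<mu> X = 1"

definition preserves_mean :: "('a, 'c) monoid_scheme \<Rightarrow> 'b set \<Rightarrow> ('a \<Rightarrow> 'b \<Rightarrow> 'b) \<Rightarrow> ('b set \<Rightarrow> real) \<Rightarrow> bool" where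
  "preserves_mean G X \<phi> \<mu> \<longleftrightarrow>
     (\<forall>g \<in> carrier G. \<forall>A. A \<subseteq> X \<longrightarrow> \<mu> (\<phi> g ` A) = \<mu> A)"

definition strongly_faithful :: "('a, 'c) monoid_scheme \<Rightarrow> 'b set \<Rightarrow> ('a \<Rightarrow> 'b \<Rightarrow> 'b) \<Rightarrow> ('b set \<Rightarrow> real) \<Rightarrow> bool" where
  "strongly_faithful G X \<phi> \<mu> \<longleftrightarrow>
     (\<forall>g \<in> carrier G. g \<noteq> \<one>\<^bsub>G\<^esub> \<longrightarrow> \<mu> {x \<in> X. \<phi> g x = x} < 1)"

text \<open>Soficity. The finite sets V are taken to be (nonempty) finite sets of naturals;
  a map into Sym(V) is a map sigma with each sigma g a bijection of V.\<close>
definition sofic :: "('a, 'c) monoid_scheme \<Rightarrow> bool" where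
  "sofic G \<longleftrightarrow>
     (\<forall>F \<epsilon>. F \<subseteq> carrier G \<longrightarrow> finite F \<longrightarrow> (\<epsilon>::real) > 0 \<longrightarrow>
        (\<exists>(V::nat set) (\<sigma>::'a \<Rightarrow> nat \<Rightarrow> nat).
           finite V \<and> V \<noteq> {} \<and>
           (\<forall>g \<in> carrier G. bij_betw (\<sigma> g) V V) \<and>
           (\<forall>g \<in> F. \<forall>h \<in> F.
              real (card {v \<in> V. \<sigma> (g \<otimes>\<^bsub>G\<^esub> h) v = \<sigma> g (\<sigma> h v)}) \<ge> (1 - \<epsilon>) * real (card V)) \<and>
           (\<forall>g \<in> F. g \<noteq> \<one>\<^bsub>G\<^esub> \<longrightarrow>
              real (card {v \<in> V. \<sigma> g v \<noteq> v}) \<ge> (1 - \<epsilon>) * real (card V))))"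

end

theory Submission
  imports Defs
begin

(* Fix a finite F in G and eps > 0.  Strong faithfulness gives q < 1 bounding the
   mean of the fixed point sets Fix g (g in F, g <> 1).  The heart of the proof is a relative
   Reiter property: there are finitely supported probability vectors nu on X that are almost
   invariant under S = F u FF and satisfy nu(Fix g) <= mu(Fix g).  It is proved by
   contradiction: finite-dimensional separation (minimal-norm point of a convex set) gives
   test functions with values in a fixed finite grid, a diagonal argument produces a
   pointwise cluster function g on the countable set X, and integrating g against a finite
   discretisation of the invariant mean makes the separating pairing vanish.
   Rounding N * nu to integer weights and letting G act on weighted copies of the support
   gives permutations that are almost multiplicative and have a proportion of at most
   (1 + q)/2 fixed points; an n-fold tensor power then yields a sofic approximation. *)

lemma square_diff_le: "((a::real) - b)^2 \<le> 2 * a^2 + 2 * b^2"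
proof -
  have "0 \<le> (a + b)^2" by simp
  thus ?thesis by (simp add: power2_eq_square algebra_simps)
qed

lemma square_sum_abs_le_card_sum_squares:
  fixes f :: "'k \<Rightarrow> real"
  assumes "finite K"
  shows "(\<Sum>k\<in>K. \<bar>f k\<bar>)^2 \<le> real (card K) * (\<Sum>k\<in>K. (f k)^2)"
proof (cases "K = {}")
  case False
  define n where "n = real (card K)"
  define s where "s = (\<Sum>k\<in>K. \<bar>f k\<bar>)"
  have npos: "0 < n" using False assms by (simp add: n_def card_gt_0_iff)
  have expand: "(n * \<bar>f k\<bar> - s)^2 = n^2 * (f k)^2 - (2 * n * s) * \<bar>f k\<bar> + s^2" for k
    by (simp add: power2_eq_square algebra_simps)
  have "0 \<le> (\<Sum>k\<in>K. (n * \<bar>f k\<bar> - s)^2)" by (simp add: sum_nonneg)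
  also have "\<dots> = n^2 * (\<Sum>k\<in>K. (f k)^2) - (2 * n * s) * s + n * s^2"
    unfolding expand by (simp add: sum.distrib sum_subtractf sum_distrib_left[symmetric] s_def n_def)
  finally have "n * s^2 \<le> n * (n * (\<Sum>k\<in>K. (f k)^2))" by (simp add: power2_eq_square algebra_simps)
  thus ?thesis using npos by (simp add: s_def n_def)
qed simp

lemma sum_squares_le_square_sum_abs:
  fixes f :: "'k \<Rightarrow> real"
  assumes "finite K"
  shows "(\<Sum>k\<in>K. (f k)^2) \<le> (\<Sum>k\<in>K. \<bar>f k\<bar>)^2"
proof -
  have "(\<Sum>k\<in>K. (f k)^2) \<le> (\<Sum>k\<in>K. \<bar>f k\<bar> * (\<Sum>k\<in>K. \<bar>f k\<bar>))"
  proof (intro sum_mono)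
    fix k assume "k \<in> K"
    hence "\<bar>f k\<bar> \<le> (\<Sum>k\<in>K. \<bar>f k\<bar>)" using assms by (intro member_le_sum) auto
    hence "\<bar>f k\<bar> * \<bar>f k\<bar> \<le> \<bar>f k\<bar> * (\<Sum>k\<in>K. \<bar>f k\<bar>)" by (intro mult_left_mono) auto
    thus "(f k)^2 \<le> \<bar>f k\<bar> * (\<Sum>k\<in>K. \<bar>f k\<bar>)" by (simp add: power2_eq_square)
  qed
  also have "\<dots> = (\<Sum>k\<in>K. \<bar>f k\<bar>)^2" by (simp add: sum_distrib_right power2_eq_square)
  finally show ?thesis .
qed

definition convex_vectors :: "('k \<Rightarrow> real) set \<Rightarrow> bool" where
  "convex_vectors D \<longleftrightarrow>
     (\<forall>u\<in>D. \<forall>v\<in>D. \<forall>t. 0 \<le> t \<longrightarrow> t \<le> 1 \<longrightarrow> (\<lambda>k. (1 - t) * u k + t * v k) \<in> D)"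

lemma min_norm_separation:
  fixes D :: "('k \<Rightarrow> real) set" and K :: "'k set"
  assumes ne: "D \<noteq> {}" and conv: "convex_vectors D"
    and upper: "\<And>d. d \<in> D \<Longrightarrow> (\<Sum>k\<in>K. (d k)^2) \<le> R"
    and lower: "\<And>d. d \<in> D \<Longrightarrow> m \<le> (\<Sum>k\<in>K. (d k)^2)" and m: "0 < m"
  shows "\<exists>p. \<forall>d\<in>D. m/2 \<le> (\<Sum>k\<in>K. p k * d k)"
proof -
  define Q where "Q = (\<lambda>d::'k\<Rightarrow>real. \<Sum>k\<in>K. (d k)^2)"
  define m0 where "m0 = Inf (Q ` D)"
  have bdd: "bdd_below (Q ` D)" using lower unfolding Q_def bdd_below_def by blast
  obtain d0 where d0: "d0 \<in> D" using ne by blast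
  have R: "0 < R" using upper[OF d0] lower[OF d0] m by linarith
  define t where "t = min 1 (m/(8*R))"
  have t: "0 < t" "t \<le> 1" "t \<le> m/(8*R)" using R m by (auto simp: t_def)
  have "\<exists>q\<in>Q`D. q < m0 + t*m/2"
    unfolding m0_def using ne t m by (intro cInf_lessD) auto
  then obtain p where pD: "p \<in> D" and pQ: "Q p < m0 + t*m/2" by auto
  show ?thesis
  proof (intro exI ballI)
    fix d assume dD: "d \<in> D"
    define y where "y = (\<lambda>k. (1-t) * p k + t * d k)"
    have "y \<in> D" unfolding y_def using conv pD dD t by (auto simp: convex_vectors_def)
    hence "m0 \<le> Q y" unfolding m0_def using bdd by (intro cInf_lower) auto
    have Qy: "Q y = Q p + 2*t*(\<Sum>k\<in>K. p k * (d k - p k)) + t^2 * (\<Sum>k\<in>K. (d k - p k)^2)"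
    proof -
      have "((1-t)*p k + t*d k)^2 = (p k)^2 + 2*t*(p k * (d k - p k)) + t^2*(d k - p k)^2" for k
        by (simp add: power2_eq_square algebra_simps)
      thus ?thesis unfolding Q_def y_def by (simp add: sum.distrib sum_distrib_left)
    qed
    have "(\<Sum>k\<in>K. (d k - p k)^2) \<le> (\<Sum>k\<in>K. 2*(d k)^2 + 2*(p k)^2)"
      by (intro sum_mono square_diff_le)
    also have "\<dots> = 2*Q d + 2*Q p" by (simp add: Q_def sum.distrib sum_distrib_left)
    also have "\<dots> \<le> 4*R" using upper[OF dD] upper[OF pD] by (simp add: Q_def)
    finally have "t^2 * (\<Sum>k\<in>K. (d k - p k)^2) \<le> t^2 * (4*R)" by (intro mult_left_mono) auto
    moreover have "t^2*(4*R) \<le> t*(m/2)"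
    proof -
      have "t*(4*R) \<le> m/2" using t R by (simp add: field_simps)
      hence "t*(t*(4*R)) \<le> t*(m/2)" using t by (intro mult_left_mono) auto
      thus ?thesis by (simp add: power2_eq_square algebra_simps)
    qed
    ultimately have "2*t*((\<Sum>k\<in>K. p k * (d k - p k)) + m/2) \<ge> 0"
      using \<open>m0 \<le> Q y\<close> Qy pQ by (simp add: algebra_simps)
    hence "(\<Sum>k\<in>K. p k * (d k - p k)) \<ge> - m/2" using t by (simp add: zero_le_mult_iff)
    moreover have "(\<Sum>k\<in>K. p k * d k) = Q p + (\<Sum>k\<in>K. p k * (d k - p k))"
      by (simp add: Q_def sum.distrib[symmetric] power2_eq_square algebra_simps)
    moreover have "m \<le> Q p" using lower[OF pD] by (simp add: Q_def)
    ultimately show "m/2 \<le> (\<Sum>k\<in>K. p k * d k)" by linarith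
  qed
qed

definition l1_thickening :: "'k set \<Rightarrow> ('k \<Rightarrow> real) set \<Rightarrow> real \<Rightarrow> ('k \<Rightarrow> real) set" where
  "l1_thickening K Q r = {(\<lambda>k. q k - b k) | q b. q \<in> Q \<and> (\<Sum>k\<in>K. \<bar>b k\<bar>) \<le> r}"

lemma l1_thickeningI:
  "q \<in> Q \<Longrightarrow> (\<Sum>k\<in>K. \<bar>b k\<bar>) \<le> r \<Longrightarrow> (\<lambda>k. q k - b k) \<in> l1_thickening K Q r"
  unfolding l1_thickening_def by blast

lemma l1_thickeningE:
  assumes "d \<in> l1_thickening K Q r"
  obtains q b where "d = (\<lambda>k. q k - b k)" "q \<in> Q" "(\<Sum>k\<in>K. \<bar>b k\<bar>) \<le> r"
  using assms unfolding l1_thickening_def by blast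

lemma convex_l1_thickening:
  assumes conv: "convex_vectors Q"
  shows "convex_vectors (l1_thickening K Q r)"
  unfolding convex_vectors_def
proof (intro ballI allI impI)
  fix u v and t :: real
  assume "u \<in> l1_thickening K Q r" "v \<in> l1_thickening K Q r" and t: "0 \<le> t" "t \<le> 1"
  obtain q1 b1 where u: "u = (\<lambda>k. q1 k - b1 k)" "q1 \<in> Q" "(\<Sum>k\<in>K. \<bar>b1 k\<bar>) \<le> r"
    using \<open>u \<in> l1_thickening K Q r\<close> by (rule l1_thickeningE)
  obtain q2 b2 where v: "v = (\<lambda>k. q2 k - b2 k)" "q2 \<in> Q" "(\<Sum>k\<in>K. \<bar>b2 k\<bar>) \<le> r"
    using \<open>v \<in> l1_thickening K Q r\<close> by (rule l1_thickeningE)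
  define b where "b = (\<lambda>k. (1-t) * b1 k + t * b2 k)"
  define q where "q = (\<lambda>k. (1-t) * q1 k + t * q2 k)"
  have "(\<Sum>k\<in>K. \<bar>b k\<bar>) \<le> (\<Sum>k\<in>K. (1-t) * \<bar>b1 k\<bar> + t * \<bar>b2 k\<bar>)"
  proof (intro sum_mono)
    fix k
    have "\<bar>b k\<bar> \<le> \<bar>(1-t) * b1 k\<bar> + \<bar>t * b2 k\<bar>" unfolding b_def by (rule abs_triangle_ineq)
    thus "\<bar>b k\<bar> \<le> (1-t) * \<bar>b1 k\<bar> + t * \<bar>b2 k\<bar>" using t by (simp add: abs_mult)
  qed
  also have "\<dots> = (1-t) * (\<Sum>k\<in>K. \<bar>b1 k\<bar>) + t * (\<Sum>k\<in>K. \<bar>b2 k\<bar>)"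
    by (simp add: sum.distrib sum_distrib_left)
  also have "\<dots> \<le> (1-t) * r + t * r"
    using u(3) v(3) t by (intro add_mono mult_left_mono) auto
  finally have "(\<Sum>k\<in>K. \<bar>b k\<bar>) \<le> r" by (simp add: algebra_simps)
  moreover have "q \<in> Q" using conv u(2) v(2) t by (auto simp: convex_vectors_def q_def)
  moreover have "(\<lambda>k. (1-t) * u k + t * v k) = (\<lambda>k. q k - b k)"
    unfolding u(1) v(1) b_def q_def by (simp add: algebra_simps)
  ultimately show "(\<lambda>k. (1-t) * u k + t * v k) \<in> l1_thickening K Q r"
    using l1_thickeningI by simp
qed

lemma l1_thickening_norm_bounds:
  assumes K: "finite K" and d: "d \<in> l1_thickening K Q (c/2)" and c: "0 < c"
    and lower: "\<And>q. q \<in> Q \<Longrightarrow> c \<le> (\<Sum>k\<in>K. \<bar>q k\<bar>)"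
    and upper: "\<And>q. q \<in> Q \<Longrightarrow> (\<Sum>k\<in>K. \<bar>q k\<bar>) \<le> B"
  shows "(c/2)^2 \<le> real (card K) * (\<Sum>k\<in>K. (d k)^2)"
    and "(\<Sum>k\<in>K. (d k)^2) \<le> 2 * B^2 + 2 * (c/2)^2"
proof -
  obtain q b where db: "d = (\<lambda>k. q k - b k)" "q \<in> Q" "(\<Sum>k\<in>K. \<bar>b k\<bar>) \<le> c/2"
    using d by (rule l1_thickeningE)
  have "(\<Sum>k\<in>K. \<bar>q k\<bar>) \<le> (\<Sum>k\<in>K. \<bar>d k\<bar> + \<bar>b k\<bar>)"
    unfolding db(1) by (intro sum_mono) auto
  hence "c/2 \<le> (\<Sum>k\<in>K. \<bar>d k\<bar>)" using lower[OF db(2)] db(3) by (simp add: sum.distrib)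
  hence "(c/2)^2 \<le> (\<Sum>k\<in>K. \<bar>d k\<bar>)^2" using c by (intro power_mono) auto
  also have "\<dots> \<le> real (card K) * (\<Sum>k\<in>K. (d k)^2)"
    by (rule square_sum_abs_le_card_sum_squares[OF K])
  finally show "(c/2)^2 \<le> real (card K) * (\<Sum>k\<in>K. (d k)^2)" .
  have "(\<Sum>k\<in>K. (d k)^2) \<le> (\<Sum>k\<in>K. 2 * (q k)^2 + 2 * (b k)^2)"
    unfolding db(1) by (intro sum_mono square_diff_le)
  also have "\<dots> = 2 * (\<Sum>k\<in>K. (q k)^2) + 2 * (\<Sum>k\<in>K. (b k)^2)"
    by (simp add: sum.distrib sum_distrib_left)
  also have "\<dots> \<le> 2 * (\<Sum>k\<in>K. \<bar>q k\<bar>)^2 + 2 * (\<Sum>k\<in>K. \<bar>b k\<bar>)^2"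
    using sum_squares_le_square_sum_abs[OF K] by (intro add_mono mult_left_mono) auto
  also have "\<dots> \<le> 2 * B^2 + 2 * (c/2)^2"
    using upper[OF db(2)] db(3) by (intro add_mono mult_left_mono power_mono) (auto intro: sum_nonneg)
  finally show "(\<Sum>k\<in>K. (d k)^2) \<le> 2 * B^2 + 2 * (c/2)^2" .
qed

text \<open>Separating the thickened set from 0 gives a functional p whose value on each q in Q
  dominates c/2 times every single coefficient of p.\<close>
lemma separation_with_margin:
  fixes Q :: "('k \<Rightarrow> real) set"
  assumes K: "finite K" and ne: "Q \<noteq> {}" and conv: "convex_vectors Q"
    and lower: "\<And>q. q \<in> Q \<Longrightarrow> c \<le> (\<Sum>k\<in>K. \<bar>q k\<bar>)"
    and upper: "\<And>q. q \<in> Q \<Longrightarrow> (\<Sum>k\<in>K. \<bar>q k\<bar>) \<le> B" and c: "0 < c"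
  shows "\<exists>p. \<forall>q\<in>Q. \<forall>k0\<in>K. c/2 * \<bar>p k0\<bar> < (\<Sum>k\<in>K. p k * q k)"
proof -
  define D where "D = l1_thickening K Q (c/2)"
  define m where "m = (c/2)^2 / real (card K)"
  obtain q0 where q0: "q0 \<in> Q" using ne by blast
  have "K \<noteq> {}" using lower[OF q0] c by auto
  hence cardK: "0 < real (card K)" using K by (simp add: card_gt_0_iff)
  have "(\<lambda>k. q0 k - 0) \<in> D" unfolding D_def using l1_thickeningI[OF q0, of "\<lambda>_. 0"] c by simp
  hence D_ne: "D \<noteq> {}" by blast
  have D_conv: "convex_vectors D" unfolding D_def by (rule convex_l1_thickening[OF conv])
  have D_low: "m \<le> (\<Sum>k\<in>K. (d k)^2)" and D_up: "(\<Sum>k\<in>K. (d k)^2) \<le> 2 * B^2 + 2 * (c/2)^2"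
    if "d \<in> D" for d
    using l1_thickening_norm_bounds[OF K that[unfolded D_def] c lower upper] cardK
    by (simp_all add: m_def field_simps)
  have m: "0 < m" using c cardK by (simp add: m_def)
  obtain p where p: "\<And>d. d \<in> D \<Longrightarrow> m / 2 \<le> (\<Sum>k\<in>K. p k * d k)"
    using min_norm_separation[OF D_ne D_conv D_up D_low m] by blast
  have "c/2 * \<bar>p k0\<bar> < (\<Sum>k\<in>K. p k * q k)" if q: "q \<in> Q" and k0: "k0 \<in> K" for q k0
  proof -
    \<comment> \<open>Test the separation against q shifted by c/2 in the direction of p at k0.\<close>
    define b where "b = (\<lambda>k. if k = k0 then c/2 * sgn (p k0) else 0)"
    have "(\<Sum>k\<in>K. \<bar>b k\<bar>) = \<bar>c/2 * sgn (p k0)\<bar>"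
      unfolding b_def using k0 K by (simp add: if_distrib sum.delta cong: if_cong)
    also have "\<dots> \<le> c/2" using c by (simp add: abs_mult abs_sgn_eq)
    finally have "(\<lambda>k. q k - b k) \<in> D" unfolding D_def by (rule l1_thickeningI[OF q])
    hence "m / 2 \<le> (\<Sum>k\<in>K. p k * (q k - b k))" by (rule p)
    also have "\<dots> = (\<Sum>k\<in>K. p k * q k) - (\<Sum>k\<in>K. p k * b k)"
      by (simp add: algebra_simps sum_subtractf)
    also have "(\<Sum>k\<in>K. p k * b k) = c/2 * \<bar>p k0\<bar>"
      unfolding b_def using k0 K by (simp add: if_distrib sum.delta abs_sgn cong: if_cong)
    finally show ?thesis using m by linarith
  qed
  thus ?thesis by blast
qed

lemma l1_separation:
  fixes Q :: "('k \<Rightarrow> real) set"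
  assumes K: "finite K" and conv: "convex_vectors Q"
    and lower: "\<And>q. q \<in> Q \<Longrightarrow> c \<le> (\<Sum>k\<in>K. \<bar>q k\<bar>)"
    and upper: "\<And>q. q \<in> Q \<Longrightarrow> (\<Sum>k\<in>K. \<bar>q k\<bar>) \<le> B" and c: "0 < c"
  shows "\<exists>f. (\<forall>k\<in>K. \<bar>f k\<bar> \<le> 1) \<and> (\<forall>q\<in>Q. c/2 < (\<Sum>k\<in>K. f k * q k))"
proof (cases "Q = {}")
  case False
  then obtain q0 where q0: "q0 \<in> Q" by blast
  have Kne: "K \<noteq> {}" using lower[OF q0] c by auto
  obtain p where p: "\<And>q k0. q \<in> Q \<Longrightarrow> k0 \<in> K \<Longrightarrow> c/2 * \<bar>p k0\<bar> < (\<Sum>k\<in>K. p k * q k)"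
    using separation_with_margin[OF K False conv lower upper c] by blast
  define M where "M = Max ((\<lambda>k. \<bar>p k\<bar>) ` K)"
  have "M \<in> (\<lambda>k. \<bar>p k\<bar>) ` K" unfolding M_def using K Kne by (intro Max_in) auto
  then obtain kM where kM: "kM \<in> K" "\<bar>p kM\<bar> = M" by auto
  have leM: "\<bar>p k\<bar> \<le> M" if "k \<in> K" for k unfolding M_def using K that by simp
  have "0 < M"
  proof (rule ccontr)
    assume "\<not> 0 < M"
    hence zero: "p k = 0" if "k \<in> K" for k using leM[OF that] by linarith
    hence "(\<Sum>k\<in>K. p k * q0 k) = 0" by simp
    thus False using p[OF q0 kM(1)] zero[OF kM(1)] by simp
  qed
  show ?thesis
  proof (intro exI conjI ballI)
    fix k assume "k \<in> K"
    show "\<bar>p k / M\<bar> \<le> 1" using leM[OF \<open>k \<in> K\<close>] \<open>0 < M\<close> by simp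
  next
    fix q assume "q \<in> Q"
    have "c/2 * M < (\<Sum>k\<in>K. p k * q k)" using p[OF \<open>q \<in> Q\<close> kM(1)] kM(2) by simp
    thus "c/2 < (\<Sum>k\<in>K. p k / M * q k)"
      using \<open>0 < M\<close> by (simp add: field_simps sum_divide_distrib[symmetric])
  qed
qed (intro exI[of _ "\<lambda>_. 0"], simp)

definition grid :: "nat \<Rightarrow> real set" where
  "grid L = {of_int i / real L | i. - int L \<le> i \<and> i \<le> int L}"

lemma finite_grid: "finite (grid L)"
  unfolding grid_def by simp

lemma zero_in_grid: "0 \<in> grid L"
  unfolding grid_def by force

lemma grid_round_down:
  assumes x: "\<bar>x\<bar> \<le> 1" and L: "0 < L"
  shows "of_int \<lfloor>x * real L\<rfloor> / real L \<in> grid L"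
    and "\<bar>x - of_int \<lfloor>x * real L\<rfloor> / real L\<bar> \<le> 1 / real L"
proof -
  have "\<bar>x * real L\<bar> \<le> real L" using x by (simp add: abs_mult mult_left_le_one_le)
  hence "- int L \<le> \<lfloor>x * real L\<rfloor> \<and> \<lfloor>x * real L\<rfloor> \<le> int L"
    by (auto simp: abs_le_iff floor_le_iff le_floor_iff)
  thus "of_int \<lfloor>x * real L\<rfloor> / real L \<in> grid L" unfolding grid_def by blast
  have "x - of_int \<lfloor>x * real L\<rfloor> / real L = (x * real L - of_int \<lfloor>x * real L\<rfloor>) / real L"
    using L by (simp add: field_simps)
  moreover have "0 \<le> x * real L - of_int \<lfloor>x * real L\<rfloor>" "x * real L - of_int \<lfloor>x * real L\<rfloor> \<le> 1"
    by linarith+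
  ultimately show "\<bar>x - of_int \<lfloor>x * real L\<rfloor> / real L\<bar> \<le> 1 / real L"
    using L by (simp add: divide_right_mono)
qed

lemma pairing_perturbation_le:
  assumes "\<And>k. k \<in> K \<Longrightarrow> \<bar>e k\<bar> \<le> 1 / real L"
  shows "(\<Sum>k\<in>K. e k * q k) \<le> (\<Sum>k\<in>K. \<bar>q k\<bar>) / real L"
proof -
  have "(\<Sum>k\<in>K. e k * q k) \<le> (\<Sum>k\<in>K. (1 / real L) * \<bar>q k\<bar>)"
  proof (intro sum_mono)
    fix k assume "k \<in> K"
    have "e k * q k \<le> \<bar>e k\<bar> * \<bar>q k\<bar>" by (metis abs_ge_self abs_mult)
    also have "\<dots> \<le> (1 / real L) * \<bar>q k\<bar>" using assms[OF \<open>k \<in> K\<close>] by (intro mult_right_mono) auto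
    finally show "e k * q k \<le> (1 / real L) * \<bar>q k\<bar>" .
  qed
  thus ?thesis by (simp add: sum_divide_distrib)
qed

lemma grid_separation:
  fixes Q :: "('k \<Rightarrow> real) set"
  assumes K: "finite K" and conv: "convex_vectors Q"
    and lower: "\<And>q. q \<in> Q \<Longrightarrow> c \<le> (\<Sum>k\<in>K. \<bar>q k\<bar>)"
    and upper: "\<And>q. q \<in> Q \<Longrightarrow> (\<Sum>k\<in>K. \<bar>q k\<bar>) \<le> B" and c: "0 < c"
    and L: "4 * B < c * real L"
  shows "\<exists>f. (\<forall>k. f k \<in> grid L) \<and> (\<forall>q\<in>Q. c/4 < (\<Sum>k\<in>K. f k * q k))"
proof (cases "Q = {}")
  case True thus ?thesis by (intro exI[of _ "\<lambda>_. 0"]) (simp add: zero_in_grid)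
next
  case False
  then obtain q0 where "q0 \<in> Q" by blast
  hence "0 < B" using lower upper c by (meson less_le_trans order_trans)
  hence "0 < c * real L" using L by linarith
  hence L_pos: "0 < L" using c by (simp add: zero_less_mult_iff)
  obtain f where f1: "\<And>k. k \<in> K \<Longrightarrow> \<bar>f k\<bar> \<le> 1"
    and f: "\<And>q. q \<in> Q \<Longrightarrow> c/2 < (\<Sum>k\<in>K. f k * q k)"
    using l1_separation[OF K conv lower upper c] by blast
  define fr where "fr k = (if k \<in> K then of_int \<lfloor>f k * real L\<rfloor> / real L else 0)" for k
  have "fr k \<in> grid L" for k
    using grid_round_down(1)[OF f1 L_pos] zero_in_grid by (auto simp: fr_def)
  moreover have "c/4 < (\<Sum>k\<in>K. fr k * q k)" if q: "q \<in> Q" for q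
  proof -
    have "(\<Sum>k\<in>K. (f k - fr k) * q k) \<le> (\<Sum>k\<in>K. \<bar>q k\<bar>) / real L"
      using grid_round_down(2)[OF f1 L_pos] by (intro pairing_perturbation_le) (simp add: fr_def)
    also have "\<dots> \<le> B / real L" using upper[OF q] L_pos by (simp add: divide_right_mono)
    also have "\<dots> < c/4" using L L_pos by (simp add: field_simps)
    finally have "(\<Sum>k\<in>K. (f k - fr k) * q k) < c/4" .
    moreover have "(\<Sum>k\<in>K. fr k * q k) = (\<Sum>k\<in>K. f k * q k) - (\<Sum>k\<in>K. (f k - fr k) * q k)"
      by (simp add: algebra_simps sum_subtractf)
    ultimately show ?thesis using f[OF q] by linarith
  qed
  ultimately show ?thesis by blast
qed

lemma infinite_fibre:
  assumes "infinite I" "finite Vals" "\<And>N. N \<in> I \<Longrightarrow> f N \<in> Vals"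
  shows "\<exists>v. v \<in> Vals \<and> infinite {N\<in>I. f N = v}"
proof (rule ccontr)
  assume "\<not> ?thesis"
  hence "finite (\<Union>v\<in>Vals. {N\<in>I. f N = v})" using assms(2) by auto
  moreover have "I = (\<Union>v\<in>Vals. {N\<in>I. f N = v})" using assms(3) by auto
  ultimately show False using assms(1) by simp
qed

text \<open>The value at the point e k attained infinitely often by the sequence along the index
  set J, and the nested index sets along which the sequence takes these values at
  e 0, ..., e (k - 1) (the diagonal argument).\<close>
definition frequent_value :: "(nat \<Rightarrow> 'b \<Rightarrow> 'v) \<Rightarrow> 'v set \<Rightarrow> nat set \<Rightarrow> 'b \<Rightarrow> 'v" where
  "frequent_value seq Vals J x = (SOME v. v \<in> Vals \<and> infinite {N \<in> J. seq N x = v})"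

primrec nested_indices :: "(nat \<Rightarrow> 'b \<Rightarrow> 'v) \<Rightarrow> 'v set \<Rightarrow> (nat \<Rightarrow> 'b) \<Rightarrow> nat \<Rightarrow> nat set" where
  "nested_indices seq Vals e 0 = UNIV"
| "nested_indices seq Vals e (Suc k) = {N \<in> nested_indices seq Vals e k.
      seq N (e k) = frequent_value seq Vals (nested_indices seq Vals e k) (e k)}"

lemma frequent_value:
  assumes "infinite J" "finite Vals" "\<And>N. seq N x \<in> Vals"
  shows "frequent_value seq Vals J x \<in> Vals"
    and "infinite {N \<in> J. seq N x = frequent_value seq Vals J x}"
  using someI_ex[OF infinite_fibre[OF assms(1,2), of "\<lambda>N. seq N x"]] assms(3)
  unfolding frequent_value_def by auto

lemma nested_indices_infinite:
  assumes "finite Vals" "\<And>N k. seq N (e k) \<in> Vals"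
  shows "infinite (nested_indices seq Vals e k)"
  by (induction k) (simp_all add: frequent_value(2) assms)

lemma nested_indices_antimono: "k \<le> l \<Longrightarrow> nested_indices seq Vals e l \<subseteq> nested_indices seq Vals e k"
  by (induction l rule: dec_induct) auto

text \<open>Compactness of the space of functions from a countable set into a finite set: a
  sequence of such functions has a cluster point, to which it comes back arbitrarily late
  on every finite set.\<close>
lemma finite_valued_cluster_function:
  fixes seq :: "nat \<Rightarrow> 'b \<Rightarrow> 'v"
  assumes X: "countable X" and Vals: "finite Vals" and seq: "\<And>N x. x \<in> X \<Longrightarrow> seq N x \<in> Vals"
  shows "\<exists>g. (\<forall>x\<in>X. g x \<in> Vals) \<and>
     (\<forall>Z N0. finite Z \<longrightarrow> Z \<subseteq> X \<longrightarrow> (\<exists>N\<ge>N0. \<forall>x\<in>Z. seq N x = g x))"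
proof (cases "X = {}")
  case False
  define e where "e = from_nat_into X"
  have eX: "seq N (e k) \<in> Vals" for N k using False seq by (simp add: e_def from_nat_into)
  define J where "J = nested_indices seq Vals e"
  have J_infinite: "infinite (J k)" for k
    unfolding J_def by (rule nested_indices_infinite) (simp_all add: Vals eX)
  define g where "g x = frequent_value seq Vals (J (to_nat_on X x)) x" for x
  have "\<exists>N\<ge>N0. \<forall>x\<in>Z. seq N x = g x" if Z: "finite Z" "Z \<subseteq> X" for Z N0
  proof -
    define K where "K = Suc (Max (insert 0 (to_nat_on X ` Z)))"
    obtain N where N: "N \<in> J K" "N0 \<le> N"
      using J_infinite[of K] by (meson infinite_nat_iff_unbounded_le)
    have "seq N x = g x" if x: "x \<in> Z" for x
    proof -
      have "to_nat_on X x < K" using Z x unfolding K_def by (simp add: le_imp_less_Suc)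
      hence "N \<in> J (Suc (to_nat_on X x))"
        using N(1) nested_indices_antimono unfolding J_def by (meson Suc_leI subsetD)
      moreover have "e (to_nat_on X x) = x" using X x Z by (auto simp: e_def)
      ultimately show ?thesis by (simp add: J_def g_def)
    qed
    thus ?thesis using N(2) by blast
  qed
  moreover have "g x \<in> Vals" if "x \<in> X" for x
    unfolding g_def by (rule frequent_value(1)) (simp_all add: J_infinite Vals seq that)
  ultimately show ?thesis by blast
qed auto

definition probability_on :: "'b set \<Rightarrow> ('b \<Rightarrow> real) \<Rightarrow> bool" where
  "probability_on Z \<nu> \<longleftrightarrow> (\<forall>x. x \<notin> Z \<longrightarrow> \<nu> x = 0) \<and> (\<forall>x. 0 \<le> \<nu> x) \<and> sum \<nu> Z = 1"

locale mean_preserving_action =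
  fixes G (structure) and X :: "'b set" and \<phi> :: "'a \<Rightarrow> 'b \<Rightarrow> 'b" and \<mu> :: "'b set \<Rightarrow> real"
  assumes group: "group G" and action: "group_action G X \<phi>" and mean: "is_mean X \<mu>"
    and preserves: "preserves_mean G X \<phi> \<mu>"
begin

lemma mean_additive: "A \<subseteq> X \<Longrightarrow> B \<subseteq> X \<Longrightarrow> A \<inter> B = {} \<Longrightarrow> \<mu> (A \<union> B) = \<mu> A + \<mu> B"
  using mean unfolding is_mean_def by blast

lemma mean_total: "\<mu> X = 1"
  using mean unfolding is_mean_def by blast

lemma mean_nonneg: "A \<subseteq> X \<Longrightarrow> 0 \<le> \<mu> A"
  using mean unfolding is_mean_def by blast

lemma mean_empty: "\<mu> {} = 0"
  using mean_additive[of "{}" "{}"] by simp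

lemma space_nonempty: "X \<noteq> {}"
  using mean_total mean_empty by auto

lemma mean_finite_UN:
  assumes "finite T" "\<And>t. t \<in> T \<Longrightarrow> A t \<subseteq> X"
    and "\<And>s t. s \<in> T \<Longrightarrow> t \<in> T \<Longrightarrow> s \<noteq> t \<Longrightarrow> A s \<inter> A t = {}"
  shows "\<mu> (\<Union>t\<in>T. A t) = (\<Sum>t\<in>T. \<mu> (A t))"
  using assms
proof (induction T rule: finite_induct)
  case (insert t T)
  have "A t \<inter> (\<Union>t\<in>T. A t) = {}" using insert.prems(2) insert.hyps(2) by blast
  hence "\<mu> (\<Union>t\<in>insert t T. A t) = \<mu> (A t) + \<mu> (\<Union>t\<in>T. A t)"
    using insert.prems(1) by (simp add: mean_additive UN_least)
  also have "\<mu> (\<Union>t\<in>T. A t) = (\<Sum>t\<in>T. \<mu> (A t))" using insert.IH insert.prems by blast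
  finally show ?case using insert.hyps by simp
qed (simp add: mean_empty)

lemma act_bij: "g \<in> carrier G \<Longrightarrow> bij_betw (\<phi> g) X X"
  using group_action.bij_prop0[OF action] by (simp add: Bij_def)

lemma act_closed: "g \<in> carrier G \<Longrightarrow> x \<in> X \<Longrightarrow> \<phi> g x \<in> X"
  using group_action.element_image[OF action] by blast

lemma act_mult: "g \<in> carrier G \<Longrightarrow> h \<in> carrier G \<Longrightarrow> x \<in> X \<Longrightarrow> \<phi> (g \<otimes> h) x = \<phi> g (\<phi> h x)"
  using group_action.composition_rule[OF action] by blast

lemma act_one: "x \<in> X \<Longrightarrow> \<phi> \<one> x = x"
  using group_action.id_eq_one[OF action] by (metis restrict_apply')

lemma mult_closed: "g \<in> carrier G \<Longrightarrow> h \<in> carrier G \<Longrightarrow> g \<otimes> h \<in> carrier G"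
  using group by (simp add: group.is_monoid monoid.m_closed)

lemma inv_closed: "g \<in> carrier G \<Longrightarrow> inv g \<in> carrier G"
  using group by (simp add: group.inv_closed)

lemma act_inv_right: "g \<in> carrier G \<Longrightarrow> x \<in> X \<Longrightarrow> \<phi> g (\<phi> (inv g) x) = x"
  using act_mult[of g "inv g" x] act_one group by (simp add: group.r_inv)

lemma act_inv_left: "g \<in> carrier G \<Longrightarrow> x \<in> X \<Longrightarrow> \<phi> (inv g) (\<phi> g x) = x"
  using act_mult[of "inv g" g x] act_one group by (simp add: group.l_inv)

definition mean_integral :: "('b \<Rightarrow> real) \<Rightarrow> real" where
  "mean_integral q = (\<Sum>r\<in>q ` X. r * \<mu> {x\<in>X. q x = r})"

lemma mean_integral_cong: "(\<And>x. x \<in> X \<Longrightarrow> q x = q' x) \<Longrightarrow> mean_integral q = mean_integral q'"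
proof -
  assume "\<And>x. x \<in> X \<Longrightarrow> q x = q' x"
  moreover from this have "q ` X = q' ` X" and "{x\<in>X. q x = r} = {x\<in>X. q' x = r}" for r
    by (auto simp: image_def)
  ultimately show ?thesis unfolding mean_integral_def by simp
qed

lemma mean_integral_indicator:
  assumes "E \<subseteq> X"
  shows "mean_integral (\<lambda>x. if x \<in> E then 1 else 0) = \<mu> E"
proof -
  let ?q = "\<lambda>x. if x \<in> E then 1 else 0 :: real"
  have "mean_integral ?q = (\<Sum>r\<in>{0, 1}. r * \<mu> {x\<in>X. ?q x = r})"
    unfolding mean_integral_def
  proof (rule sum.mono_neutral_left)
    show "\<forall>r\<in>{0, 1} - ?q ` X. r * \<mu> {x\<in>X. ?q x = r} = 0"
    proof
      fix r assume "r \<in> {0, 1} - ?q ` X"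
      hence "{x\<in>X. ?q x = r} = {}" by auto
      thus "r * \<mu> {x\<in>X. ?q x = r} = 0" by (metis mean_empty mult_zero_right)
    qed
  qed auto
  also have "\<dots> = \<mu> {x\<in>X. ?q x = 1}" by simp
  also have "{x\<in>X. ?q x = 1} = E" using assms by auto
  finally show ?thesis .
qed

lemma mean_integral_factor:
  assumes fin: "finite (\<tau> ` X)"
  shows "mean_integral (\<lambda>x. F (\<tau> x)) = (\<Sum>t\<in>\<tau> ` X. F t * \<mu> {x\<in>X. \<tau> x = t})"
proof -
  have img: "(\<lambda>x. F (\<tau> x)) ` X = F ` (\<tau> ` X)" by auto
  have "{x\<in>X. F (\<tau> x) = r} = (\<Union>t\<in>{t\<in>\<tau>`X. F t = r}. {x\<in>X. \<tau> x = t})" for r by auto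
  hence fibre: "\<mu> {x\<in>X. F (\<tau> x) = r} = (\<Sum>t\<in>{t\<in>\<tau>`X. F t = r}. \<mu> {x\<in>X. \<tau> x = t})" for r
    using fin by (simp, intro mean_finite_UN) auto
  have "mean_integral (\<lambda>x. F (\<tau> x))
      = (\<Sum>r\<in>F`(\<tau>`X). (\<Sum>t\<in>{t\<in>\<tau>`X. F t = r}. F t * \<mu> {x\<in>X. \<tau> x = t}))"
    unfolding mean_integral_def img fibre by (intro sum.cong refl) (auto simp: sum_distrib_left)
  also have "\<dots> = (\<Sum>t\<in>\<tau>`X. F t * \<mu> {x\<in>X. \<tau> x = t})"
    using fin by (intro sum.group) auto
  finally show ?thesis .
qed

lemma mean_integral_translate:
  assumes s: "s \<in> carrier G"
  shows "mean_integral (\<lambda>x. q (\<phi> (inv s) x)) = mean_integral q"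
proof -
  have "\<phi> (inv s) ` X = X" using act_bij[OF inv_closed[OF s]] by (simp add: bij_betw_def)
  hence img: "(\<lambda>x. q (\<phi> (inv s) x)) ` X = q ` X" by (metis image_image)
  have "{x\<in>X. q (\<phi> (inv s) x) = r} = \<phi> s ` {y\<in>X. q y = r}" for r
  proof (intro equalityI subsetI)
    fix x assume x: "x \<in> {x\<in>X. q (\<phi> (inv s) x) = r}"
    hence "x = \<phi> s (\<phi> (inv s) x)" using act_inv_right[OF s] by auto
    moreover have "\<phi> (inv s) x \<in> {y\<in>X. q y = r}" using x act_closed[OF inv_closed[OF s]] by auto
    ultimately show "x \<in> \<phi> s ` {y\<in>X. q y = r}" by blast
  qed (use act_inv_left[OF s] act_closed[OF s] in auto)
  moreover have "\<mu> (\<phi> s ` {y\<in>X. q y = r}) = \<mu> {y\<in>X. q y = r}" for r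
    using preserves s unfolding preserves_mean_def by auto
  ultimately show ?thesis unfolding mean_integral_def img by simp
qed

text \<open>Discretisation of the mean: for a map with finitely many values, putting the mass of
  each fibre on one representative point gives a finitely supported vector that integrates
  every function factoring through the map exactly like the mean.\<close>
lemma mean_discretization:
  assumes fin: "finite (\<tau> ` X)"
  obtains Z \<nu> where "finite Z" "Z \<subseteq> X" "\<And>x. x \<notin> Z \<Longrightarrow> \<nu> x = 0" "\<And>x. 0 \<le> \<nu> x"
    "\<And>F. (\<Sum>z\<in>Z. \<nu> z * F (\<tau> z)) = mean_integral (\<lambda>x. F (\<tau> x))"
proof -
  define T where "T = \<tau> ` X"
  define rep where "rep t = (SOME x. x \<in> X \<and> \<tau> x = t)" for t
  have rep: "rep t \<in> X \<and> \<tau> (rep t) = t" if "t \<in> T" for t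
    unfolding rep_def by (rule someI_ex) (use that in \<open>auto simp: T_def\<close>)
  have rep_inj: "inj_on rep T" by (rule inj_onI) (metis rep)
  define \<nu> where "\<nu> z = (\<Sum>t\<in>T. if rep t = z then \<mu> {x\<in>X. \<tau> x = t} else 0)" for z
  have \<nu>_rep: "\<nu> (rep t) = \<mu> {x\<in>X. \<tau> x = t}" if "t \<in> T" for t
  proof -
    have "\<nu> (rep t) = (\<Sum>t'\<in>T. if t' = t then \<mu> {x\<in>X. \<tau> x = t'} else 0)"
      unfolding \<nu>_def using rep_inj that by (intro sum.cong refl) (auto dest: inj_onD)
    thus ?thesis using fin that by (simp add: T_def)
  qed
  show ?thesis
  proof
    show "finite (rep ` T)" using fin by (simp add: T_def)
    show "rep ` T \<subseteq> X" using rep by auto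
    show "\<nu> x = 0" if "x \<notin> rep ` T" for x using that unfolding \<nu>_def by (intro sum.neutral) auto
    show "0 \<le> \<nu> x" for x unfolding \<nu>_def by (intro sum_nonneg) (simp add: mean_nonneg)
    show "(\<Sum>z\<in>rep ` T. \<nu> z * F (\<tau> z)) = mean_integral (\<lambda>x. F (\<tau> x))" for F
    proof -
      have "(\<Sum>z\<in>rep ` T. \<nu> z * F (\<tau> z)) = (\<Sum>t\<in>T. F t * \<mu> {x\<in>X. \<tau> x = t})"
        using rep_inj by (simp add: sum.reindex \<nu>_rep rep mult.commute)
      thus ?thesis using mean_integral_factor[OF fin] by (simp add: T_def)
    qed
  qed
qed

end

lemma finite_subset_initial_enumeration:
  assumes "countable X" "finite Z" "Z \<subseteq> X"
  shows "\<exists>N1. \<forall>N\<ge>N1. Z \<subseteq> from_nat_into X ` {..<N}"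
proof (intro exI allI impI subsetI)
  fix N z assume N: "Suc (Max (insert 0 (to_nat_on X ` Z))) \<le> N" and z: "z \<in> Z"
  have "to_nat_on X z \<le> Max (insert 0 (to_nat_on X ` Z))" using assms(2) z by simp
  hence "to_nat_on X z < N" using N by linarith
  moreover have "from_nat_into X (to_nat_on X z) = z"
    using assms z by (simp add: subsetD)
  ultimately show "z \<in> from_nat_into X ` {..<N}" by force
qed

context mean_preserving_action
begin

definition translates :: "'a set \<Rightarrow> 'b set \<Rightarrow> 'b set" where
  "translates S Z = Z \<union> (\<Union>s\<in>S. \<phi> (inv s) ` Z)"

lemma translates_subset: "S \<subseteq> carrier G \<Longrightarrow> Z \<subseteq> X \<Longrightarrow> translates S Z \<subseteq> X"
  unfolding translates_def using act_closed inv_closed by blast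

lemma finite_translates: "finite S \<Longrightarrow> finite Z \<Longrightarrow> finite (translates S Z)"
  by (simp add: translates_def)

definition translation_defect :: "'a set \<Rightarrow> 'b set \<Rightarrow> ('b \<Rightarrow> real) \<Rightarrow> real" where
  "translation_defect S Y \<nu> = (\<Sum>s\<in>S. \<Sum>y\<in>Y. \<bar>\<nu> (\<phi> s y) - \<nu> y\<bar>)"

lemma translation_defect_le:
  assumes S: "finite S" "S \<subseteq> carrier G" and Y: "finite Y" "Y \<subseteq> X" "Z \<subseteq> Y"
    and \<nu>: "probability_on Z \<nu>"
  shows "translation_defect S Y \<nu> \<le> 2 * real (card S)"
proof -
  have out: "\<nu> x = 0" if "x \<notin> Z" for x using \<nu> that unfolding probability_on_def by auto
  have nonneg: "0 \<le> \<nu> x" for x using \<nu> unfolding probability_on_def by auto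
  have total: "sum \<nu> Z = 1" using \<nu> unfolding probability_on_def by auto
  have fZ: "finite Z" using Y finite_subset by blast
  have sumY: "(\<Sum>y\<in>Y. \<nu> y) = 1"
    using total sum.mono_neutral_right[OF Y(1) Y(3), of \<nu>] out by auto
  have sum_translate: "(\<Sum>y\<in>Y. \<nu> (\<phi> s y)) \<le> 1" if s: "s \<in> S" for s
  proof -
    have "inj_on (\<phi> s) Y"
      using act_bij s S(2) Y(2) by (meson bij_betw_def inj_on_subset subsetD)
    hence "(\<Sum>y\<in>Y. \<nu> (\<phi> s y)) = (\<Sum>z\<in>\<phi> s ` Y. \<nu> z)" by (simp add: sum.reindex)
    also have "\<dots> \<le> (\<Sum>z\<in>\<phi> s ` Y \<union> Z. \<nu> z)" using Y fZ nonneg by (intro sum_mono2) auto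
    also have "\<dots> = (\<Sum>z\<in>Z. \<nu> z)" using Y fZ out by (intro sum.mono_neutral_left[symmetric]) auto
    finally show ?thesis using total by simp
  qed
  have "translation_defect S Y \<nu> \<le> (\<Sum>s\<in>S. (\<Sum>y\<in>Y. \<nu> (\<phi> s y)) + (\<Sum>y\<in>Y. \<nu> y))"
    unfolding translation_defect_def sum.distrib[symmetric]
    by (intro sum_mono) (smt (verit) nonneg)
  also have "\<dots> \<le> (\<Sum>s\<in>S. 2)" using sumY sum_translate by (intro sum_mono) auto
  finally show ?thesis by simp
qed

definition constrained_probabilities :: "'b set \<Rightarrow> 'j set \<Rightarrow> ('j \<Rightarrow> 'b set) \<Rightarrow> ('b \<Rightarrow> real) set" where
  "constrained_probabilities Z J E =
     {\<nu>. probability_on Z \<nu> \<and> (\<forall>j\<in>J. sum \<nu> (Z \<inter> E j) \<le> \<mu> (E j))}"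

lemma convex_constrained_probabilities: "convex_vectors (constrained_probabilities Z J E)"
  unfolding convex_vectors_def
proof (intro ballI allI impI)
  fix \<nu>1 \<nu>2 and t :: real
  assume 1: "\<nu>1 \<in> constrained_probabilities Z J E" and 2: "\<nu>2 \<in> constrained_probabilities Z J E"
    and t: "0 \<le> t" "t \<le> 1"
  have "(1-t) * sum \<nu>1 (Z \<inter> E j) + t * sum \<nu>2 (Z \<inter> E j) \<le> \<mu> (E j)" if "j \<in> J" for j
  proof -
    have "(1-t) * sum \<nu>1 (Z \<inter> E j) \<le> (1-t) * \<mu> (E j)" "t * sum \<nu>2 (Z \<inter> E j) \<le> t * \<mu> (E j)"
      using 1 2 that t by (auto simp: constrained_probabilities_def intro: mult_left_mono)
    thus ?thesis by (simp add: algebra_simps)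
  qed
  thus "(\<lambda>x. (1-t) * \<nu>1 x + t * \<nu>2 x) \<in> constrained_probabilities Z J E"
    using 1 2 t
    by (simp add: constrained_probabilities_def probability_on_def sum.distrib sum_distrib_left[symmetric])
qed

definition translation_pairing ::
    "'a set \<Rightarrow> 'b set \<Rightarrow> ('a \<times> 'b \<Rightarrow> real) \<Rightarrow> ('b \<Rightarrow> real) \<Rightarrow> real" where
  "translation_pairing S Y f \<nu> = (\<Sum>s\<in>S. \<Sum>y\<in>Y. f (s, y) * (\<nu> (\<phi> s y) - \<nu> y))"

lemma grid_separator:
  assumes S: "finite S" "S \<subseteq> carrier G" and Z: "finite Z" "Z \<subseteq> X" and c: "0 < c"
    and L: "8 * real (card S) < c * real L"
    and defect: "\<And>\<nu>. \<nu> \<in> constrained_probabilities Z J E \<Longrightarrow> c \<le> translation_defect S (translates S Z) \<nu>"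
  shows "\<exists>f. (\<forall>k. f k \<in> grid L) \<and>
           (\<forall>\<nu>\<in>constrained_probabilities Z J E. c/4 < translation_pairing S (translates S Z) f \<nu>)"
proof -
  define Y where "Y = translates S Z"
  define P where "P = constrained_probabilities Z J E"
  define \<Psi> where "\<Psi> \<nu> = (\<lambda>(s, y). \<nu> (\<phi> s y) - \<nu> y :: real)" for \<nu>
  have Y: "finite Y" "Y \<subseteq> X" "Z \<subseteq> Y"
    using S Z by (auto simp: Y_def finite_translates translates_subset) (simp add: translates_def)
  have K: "finite (S \<times> Y)" using S Y by simp
  have pairs: "(\<Sum>k\<in>S \<times> Y. F k) = (\<Sum>s\<in>S. \<Sum>y\<in>Y. F (s, y))" for F :: "_ \<Rightarrow> real"
    by (simp add: sum.cartesian_product)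
  have l1: "(\<Sum>k\<in>S \<times> Y. \<bar>\<Psi> \<nu> k\<bar>) = translation_defect S Y \<nu>" for \<nu>
    by (simp add: pairs \<Psi>_def translation_defect_def)
  have "convex_vectors (\<Psi> ` P)"
    unfolding convex_vectors_def
  proof (intro ballI allI impI)
    fix u v and t :: real assume "u \<in> \<Psi> ` P" "v \<in> \<Psi> ` P" "0 \<le> t" "t \<le> 1"
    then obtain \<nu>1 \<nu>2 where "\<nu>1 \<in> P" "\<nu>2 \<in> P" "u = \<Psi> \<nu>1" "v = \<Psi> \<nu>2" by blast
    moreover have "(\<lambda>x. (1-t) * \<nu>1 x + t * \<nu>2 x) \<in> P"
      using convex_constrained_probabilities \<open>\<nu>1 \<in> P\<close> \<open>\<nu>2 \<in> P\<close> \<open>0 \<le> t\<close> \<open>t \<le> 1\<close>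
      unfolding P_def convex_vectors_def by blast
    moreover have "(\<lambda>k. (1-t) * \<Psi> \<nu>1 k + t * \<Psi> \<nu>2 k) = \<Psi> (\<lambda>x. (1-t) * \<nu>1 x + t * \<nu>2 x)"
      by (auto simp: \<Psi>_def algebra_simps)
    ultimately show "(\<lambda>k. (1-t) * u k + t * v k) \<in> \<Psi> ` P" by auto
  qed
  moreover have "c \<le> (\<Sum>k\<in>S \<times> Y. \<bar>q k\<bar>)" if "q \<in> \<Psi> ` P" for q
    using that defect unfolding P_def Y_def[symmetric] by (auto simp: l1)
  moreover have "(\<Sum>k\<in>S \<times> Y. \<bar>q k\<bar>) \<le> 2 * real (card S)" if "q \<in> \<Psi> ` P" for q
    using that translation_defect_le[OF S Y] by (auto simp: l1 P_def constrained_probabilities_def)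
  ultimately obtain f where f: "\<forall>k. f k \<in> grid L" "\<forall>\<nu>\<in>P. c/4 < (\<Sum>k\<in>S \<times> Y. f k * \<Psi> \<nu> k)"
    using grid_separation[OF K _ _ _ c, of "\<Psi> ` P" "2 * real (card S)" L] L by auto
  have "(\<Sum>k\<in>S \<times> Y. f k * \<Psi> \<nu> k) = (\<Sum>s\<in>S. \<Sum>y\<in>Y. f (s, y) * (\<nu> (\<phi> s y) - \<nu> y))" for \<nu>
    by (simp add: pairs \<Psi>_def)
  thus ?thesis using f unfolding P_def Y_def translation_pairing_def by auto
qed

lemma translate_pairing:
  fixes f \<nu> :: "'b \<Rightarrow> real"
  assumes s: "s \<in> carrier G" and Y: "finite Y" "Y \<subseteq> X" "Z \<union> \<phi> (inv s) ` Z \<subseteq> Y"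
    and \<nu>: "\<And>x. x \<notin> Z \<Longrightarrow> \<nu> x = 0"
  shows "(\<Sum>y\<in>Y. f y * (\<nu> (\<phi> s y) - \<nu> y)) = (\<Sum>z\<in>Z. \<nu> z * (f (\<phi> (inv s) z) - f z))"
proof -
  have ZX: "Z \<subseteq> X" and fZ: "finite Z" using Y finite_subset by auto
  have shifted_out: "\<nu> (\<phi> s y) = 0" if "y \<in> Y" "y \<notin> \<phi> (inv s) ` Z" for y
  proof (rule \<nu>)
    show "\<phi> s y \<notin> Z"
      using that act_inv_left[OF s, of y] Y(2) by (metis image_eqI subsetD)
  qed
  have "(\<Sum>y\<in>Y. f y * \<nu> (\<phi> s y)) = (\<Sum>y\<in>\<phi> (inv s) ` Z. f y * \<nu> (\<phi> s y))"
    using Y shifted_out by (intro sum.mono_neutral_right) auto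
  also have "\<dots> = (\<Sum>z\<in>Z. f (\<phi> (inv s) z) * \<nu> (\<phi> s (\<phi> (inv s) z)))"
    using act_bij[OF inv_closed[OF s]] ZX
    by (subst sum.reindex) (auto simp: bij_betw_def intro: inj_on_subset)
  also have "\<dots> = (\<Sum>z\<in>Z. \<nu> z * f (\<phi> (inv s) z))"
    using act_inv_right[OF s] ZX by (intro sum.cong) auto
  finally have "(\<Sum>y\<in>Y. f y * \<nu> (\<phi> s y)) = (\<Sum>z\<in>Z. \<nu> z * f (\<phi> (inv s) z))" .
  moreover have "(\<Sum>y\<in>Y. f y * \<nu> y) = (\<Sum>z\<in>Z. \<nu> z * f z)"
    using Y \<nu> by (subst sum.mono_neutral_right[of Y Z]) (auto simp: mult.commute)
  ultimately show ?thesis by (simp add: algebra_simps sum_subtractf)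
qed

lemma translation_pairing_vanishes:
  assumes S: "finite S" "S \<subseteq> carrier G" and Y: "finite Y" "Y \<subseteq> X" "translates S Z \<subseteq> Y"
    and out: "\<And>x. x \<notin> Z \<Longrightarrow> \<nu> x = 0"
    and agree: "\<forall>s\<in>S. \<forall>x\<in>translates S Z. f (s, x) = g x s"
    and invariant: "\<forall>s\<in>S. (\<Sum>z\<in>Z. \<nu> z * (g (\<phi> (inv s) z) s - g z s)) = 0"
  shows "translation_pairing S Y f \<nu> = 0"
  unfolding translation_pairing_def
proof (rule sum.neutral, rule ballI)
  fix s assume s: "s \<in> S"
  have sub: "Z \<union> \<phi> (inv s) ` Z \<subseteq> translates S Z" using s by (auto simp: translates_def)
  have "(\<Sum>y\<in>Y. f (s, y) * (\<nu> (\<phi> s y) - \<nu> y))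
      = (\<Sum>z\<in>Z. \<nu> z * (f (s, \<phi> (inv s) z) - f (s, z)))"
    using s S(2) Y sub out by (intro translate_pairing[where f = "\<lambda>y. f (s, y)"]) auto
  also have "\<dots> = (\<Sum>z\<in>Z. \<nu> z * (g (\<phi> (inv s) z) s - g z s))"
  proof (intro sum.cong refl)
    fix z assume "z \<in> Z"
    hence "z \<in> translates S Z" "\<phi> (inv s) z \<in> translates S Z" using sub by auto
    thus "\<nu> z * (f (s, \<phi> (inv s) z) - f (s, z)) = \<nu> z * (g (\<phi> (inv s) z) s - g z s)"
      using agree s by simp
  qed
  finally show "(\<Sum>y\<in>Y. f (s, y) * (\<nu> (\<phi> s y) - \<nu> y)) = 0" using invariant s by simp
qed

lemma constrained_probabilities_mono:
  assumes "finite Z'" "Z \<subseteq> Z'" and \<nu>: "probability_on Z \<nu>"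
    and constraint: "\<forall>j\<in>J. sum \<nu> (Z \<inter> E j) \<le> \<mu> (E j)"
  shows "\<nu> \<in> constrained_probabilities Z' J E"
proof -
  have out: "\<nu> x = 0" if "x \<notin> Z" for x using \<nu> that by (simp add: probability_on_def)
  have "sum \<nu> (Z' \<inter> A) = sum \<nu> (Z \<inter> A)" for A
  proof (rule sum.mono_neutral_right)
    show "\<forall>i\<in>Z' \<inter> A - Z \<inter> A. \<nu> i = 0" using out by blast
  qed (use assms(1,2) in auto)
  thus ?thesis using \<nu> assms(2) constraint out sum.mono_neutral_right[OF assms(1,2), of \<nu>]
    by (auto simp: constrained_probabilities_def probability_on_def)
qed

end

context mean_preserving_action
begin

lemma invariant_discretization:
  fixes g :: "'b \<Rightarrow> 'a \<Rightarrow> real"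
  assumes S: "finite S" "S \<subseteq> carrier G" and J: "finite J" "\<forall>j\<in>J. E j \<subseteq> X"
    and V: "finite V" and g_values: "\<forall>x\<in>X. g x \<in> PiE S (\<lambda>_. V)"
  shows "\<exists>Z \<nu>. finite Z \<and> Z \<subseteq> X \<and> probability_on Z \<nu> \<and>
    (\<forall>j\<in>J. sum \<nu> (Z \<inter> E j) = \<mu> (E j)) \<and>
    (\<forall>s\<in>S. (\<Sum>z\<in>Z. \<nu> z * (g (\<phi> (inv s) z) s - g z s)) = 0)"
proof -
  note g = g_values[rule_format]
  define \<tau> where "\<tau> x = (restrict (\<lambda>j. x \<in> E j) J, g x, restrict (\<lambda>s. g (\<phi> (inv s) x) s) S)" for x
  have "\<tau> x \<in> PiE J (\<lambda>_. UNIV) \<times> PiE S (\<lambda>_. V) \<times> PiE S (\<lambda>_. V)" if x: "x \<in> X" for x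
  proof -
    have "g (\<phi> (inv s) x) s \<in> V" if "s \<in> S" for s
      using g[OF act_closed[OF inv_closed x]] that S(2) by (auto simp: PiE_iff)
    thus ?thesis using g[OF x] by (simp add: \<tau>_def)
  qed
  hence "\<tau> ` X \<subseteq> PiE J (\<lambda>_. UNIV) \<times> PiE S (\<lambda>_. V) \<times> PiE S (\<lambda>_. V)" by blast
  moreover have "finite (PiE J (\<lambda>_. UNIV :: bool set) \<times> PiE S (\<lambda>_. V) \<times> PiE S (\<lambda>_. V))"
    using J S V by (simp add: finite_PiE)
  ultimately have "finite (\<tau> ` X)" by (rule finite_subset)
  obtain Z \<nu> where Z: "finite Z" "Z \<subseteq> X" and out: "\<And>x. x \<notin> Z \<Longrightarrow> \<nu> x = 0"
    and nonneg: "\<And>x. 0 \<le> \<nu> x"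
    and integral: "\<And>F. (\<Sum>z\<in>Z. \<nu> z * F (\<tau> z)) = mean_integral (\<lambda>x. F (\<tau> x))"
    using mean_discretization[OF \<open>finite (\<tau> ` X)\<close>] by blast
  have constraint: "sum \<nu> (Z \<inter> E j) = \<mu> (E j)" if j: "j \<in> J" for j
  proof -
    have "sum \<nu> (Z \<inter> E j) = (\<Sum>z\<in>Z. \<nu> z * (if fst (\<tau> z) j then 1 else 0))"
      using Z j by (simp add: \<tau>_def sum.inter_restrict if_distrib cong: if_cong)
    also have "\<dots> = mean_integral (\<lambda>x. if fst (\<tau> x) j then 1 else 0)"
      using integral[of "\<lambda>t. if fst t j then 1 else 0"] by simp
    also have "\<dots> = mean_integral (\<lambda>x. if x \<in> E j then 1 else 0)"
      by (rule mean_integral_cong) (simp add: \<tau>_def j)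
    finally show ?thesis using mean_integral_indicator J(2) j by simp
  qed
  have "sum \<nu> Z = mean_integral (\<lambda>x. 1)" using integral[of "\<lambda>_. 1"] by simp
  also have "\<dots> = mean_integral (\<lambda>x. if x \<in> X then 1 else 0)" by (rule mean_integral_cong) simp
  finally have total: "sum \<nu> Z = 1" using mean_integral_indicator[of X] mean_total by simp
  have invariant: "(\<Sum>z\<in>Z. \<nu> z * (g (\<phi> (inv s) z) s - g z s)) = 0" if s: "s \<in> S" for s
  proof -
    have "(\<Sum>z\<in>Z. \<nu> z * (g (\<phi> (inv s) z) s - g z s))
        = (\<Sum>z\<in>Z. \<nu> z * snd (snd (\<tau> z)) s) - (\<Sum>z\<in>Z. \<nu> z * fst (snd (\<tau> z)) s)"
      using s by (simp add: \<tau>_def algebra_simps sum_subtractf)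
    also have "\<dots> = mean_integral (\<lambda>x. snd (snd (\<tau> x)) s) - mean_integral (\<lambda>x. fst (snd (\<tau> x)) s)"
      using integral[of "\<lambda>t. snd (snd t) s"] integral[of "\<lambda>t. fst (snd t) s"] by simp
    also have "\<dots> = mean_integral (\<lambda>x. g (\<phi> (inv s) x) s) - mean_integral (\<lambda>x. g x s)"
      using s by (simp add: \<tau>_def)
    also have "\<dots> = 0" using mean_integral_translate[of s "\<lambda>x. g x s"] s S(2) by auto
    finally show ?thesis .
  qed
  show ?thesis
    using Z constraint invariant out nonneg total
    by (intro exI[of _ Z] exI[of _ \<nu>]) (simp add: probability_on_def)
qed

text \<open>The proof is by contradiction: separation produces test functions
  with values in a fixed finite grid, a cluster point of these is integrated against a
  discretisation of the invariant mean, and invariance forces the pairing to vanish.\<close>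
theorem approximately_invariant_probability:
  assumes X: "countable X" and S: "finite S" "S \<subseteq> carrier G"
    and J: "finite J" "\<And>j. j \<in> J \<Longrightarrow> E j \<subseteq> X" and c: "0 < c"
  shows "\<exists>Z \<nu>. finite Z \<and> Z \<subseteq> X \<and> \<nu> \<in> constrained_probabilities Z J E \<and>
           translation_defect S (translates S Z) \<nu> < c"
proof (rule ccontr)
  assume no_invariant: "\<not> ?thesis"
  obtain L :: nat where L: "8 * real (card S) < c * real L"
    using reals_Archimedean2[of "8 * real (card S) / c"] c by (auto simp: field_simps)
  define XN where "XN N = from_nat_into X ` {..<N}" for N
  have XN: "finite (XN N)" "XN N \<subseteq> X" for N
    using from_nat_into[OF space_nonempty] by (auto simp: XN_def)
  define P where "P N = constrained_probabilities (XN N) J E" for N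
  have "\<forall>N. \<exists>f. (\<forall>k. f k \<in> grid L) \<and> (\<forall>\<nu>\<in>P N. c/4 < translation_pairing S (translates S (XN N)) f \<nu>)"
    unfolding P_def
    by (intro allI grid_separator[OF S XN c L]) (use no_invariant XN in \<open>force simp: not_less\<close>)
  from choice[OF this] obtain f where f_grid: "\<forall>N k. f N k \<in> grid L"
    and separates: "\<forall>N. \<forall>\<nu>\<in>P N. c/4 < translation_pairing S (translates S (XN N)) (f N) \<nu>"
    by blast
  \<comment> \<open>A cluster point of the separating functions, viewed as functions on X.\<close>
  have "finite (PiE S (\<lambda>_. grid L))" using S(1) by (simp add: finite_PiE finite_grid)
  moreover have "\<And>N x. x \<in> X \<Longrightarrow> restrict (\<lambda>s. f N (s, x)) S \<in> PiE S (\<lambda>_. grid L)"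
    using f_grid by simp
  ultimately have "\<exists>g. (\<forall>x\<in>X. g x \<in> PiE S (\<lambda>_. grid L)) \<and>
      (\<forall>Z N0. finite Z \<longrightarrow> Z \<subseteq> X \<longrightarrow> (\<exists>N\<ge>N0. \<forall>x\<in>Z. restrict (\<lambda>s. f N (s, x)) S = g x))"
    by (rule finite_valued_cluster_function[OF X, where seq = "\<lambda>N x. restrict (\<lambda>s. f N (s, x)) S"])
  then obtain g where g_values: "\<forall>x\<in>X. g x \<in> PiE S (\<lambda>_. grid L)" and cluster:
    "\<forall>Z N0. finite Z \<longrightarrow> Z \<subseteq> X \<longrightarrow> (\<exists>N\<ge>N0. \<forall>x\<in>Z. restrict (\<lambda>s. f N (s, x)) S = g x)"
    by blast
  have "\<forall>j\<in>J. E j \<subseteq> X" using J(2) by blast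
  from invariant_discretization[OF S J(1) this finite_grid g_values]
  obtain Z \<nu> where Z: "finite Z" "Z \<subseteq> X" and \<nu>: "probability_on Z \<nu>"
    and constraint: "\<forall>j\<in>J. sum \<nu> (Z \<inter> E j) = \<mu> (E j)"
    and invariant: "\<forall>s\<in>S. (\<Sum>z\<in>Z. \<nu> z * (g (\<phi> (inv s) z) s - g z s)) = 0"
    by (elim exE conjE)
  obtain N1 where N1: "\<And>N. N \<ge> N1 \<Longrightarrow> Z \<subseteq> XN N"
    using finite_subset_initial_enumeration[OF X Z] unfolding XN_def by blast
  obtain N where N: "N \<ge> N1" "\<forall>x\<in>translates S Z. restrict (\<lambda>s. f N (s, x)) S = g x"
    using cluster finite_translates[OF S(1) Z(1)] translates_subset[OF S(2) Z(2)] by blast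
  have ZN: "Z \<subseteq> XN N" using N1 N(1) .
  have "\<forall>j\<in>J. sum \<nu> (Z \<inter> E j) \<le> \<mu> (E j)" using constraint by simp
  hence "\<nu> \<in> P N" unfolding P_def by (rule constrained_probabilities_mono[OF XN(1) ZN \<nu>])
  hence "c/4 < translation_pairing S (translates S (XN N)) (f N) \<nu>" using separates by blast
  moreover have "translation_pairing S (translates S (XN N)) (f N) \<nu> = 0"
  proof (rule translation_pairing_vanishes[OF S _ _ _ _ _ invariant])
    show "translates S Z \<subseteq> translates S (XN N)" using ZN by (auto simp: translates_def)
    show "\<forall>s\<in>S. \<forall>x\<in>translates S Z. f N (s, x) = g x s"
      using N(2) by (metis restrict_apply')
  qed (use \<nu> S XN in \<open>auto simp: probability_on_def finite_translates translates_subset\<close>)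
  ultimately show False using c by simp
qed

end

lemma extend_to_bijection:
  assumes V: "finite V" and D: "D \<subseteq> V" and inj: "inj_on f D" and fD: "f ` D \<subseteq> V"
  shows "\<exists>h. bij_betw h V V \<and> (\<forall>v\<in>D. h v = f v)"
proof -
  have "card (V - D) = card (V - f ` D)"
    using V D fD inj by (simp add: card_Diff_subset card_image finite_subset)
  then obtain b where b: "bij_betw b (V - D) (V - f ` D)"
    using V by (meson finite_Diff finite_same_card_bij)
  define h where "h v = (if v \<in> D then f v else b v)" for v
  have "bij_betw h (D \<union> (V - D)) (f ` D \<union> (V - f ` D))"
  proof (rule bij_betw_combine)
    show "bij_betw h D (f ` D)" using inj unfolding h_def by (simp add: bij_betw_def inj_on_def)
    show "bij_betw h (V - D) (V - f ` D)" using b unfolding h_def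
      by (rule bij_betw_cong[THEN iffD1, rotated]) auto
  qed blast
  moreover have "D \<union> (V - D) = V" "f ` D \<union> (V - f ` D) = V" using D fD by auto
  ultimately show ?thesis unfolding h_def by auto
qed

definition coordinatewise :: "'i set \<Rightarrow> ('v \<Rightarrow> 'v) \<Rightarrow> ('i \<Rightarrow> 'v) \<Rightarrow> ('i \<Rightarrow> 'v)" where
  "coordinatewise I h v = restrict (\<lambda>i. h (v i)) I"

lemma bij_betw_coordinatewise:
  assumes h: "bij_betw h A A"
  shows "bij_betw (coordinatewise I h) (PiE I (\<lambda>_. A)) (PiE I (\<lambda>_. A))"
proof -
  have hA: "h a \<in> A" if "a \<in> A" for a using h that by (auto simp: bij_betw_def)
  have inj: "inj_on (coordinatewise I h) (PiE I (\<lambda>_. A))"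
  proof (rule inj_onI)
    fix v v' assume v: "v \<in> PiE I (\<lambda>_. A)" and v': "v' \<in> PiE I (\<lambda>_. A)"
      and eq: "coordinatewise I h v = coordinatewise I h v'"
    show "v = v'"
    proof (rule PiE_ext[OF v v'])
      fix i assume "i \<in> I"
      hence "h (v i) = h (v' i)" using fun_cong[OF eq, of i] by (simp add: coordinatewise_def)
      thus "v i = v' i" using h v v' \<open>i \<in> I\<close> by (auto simp: bij_betw_def dest: inj_onD)
    qed
  qed
  have "u \<in> coordinatewise I h ` PiE I (\<lambda>_. A)" if u: "u \<in> PiE I (\<lambda>_. A)" for u
  proof -
    define v where "v = restrict (\<lambda>i. inv_into A h (u i)) I"
    have "v \<in> PiE I (\<lambda>_. A)" unfolding v_def using u h
      by (auto simp: bij_betw_def PiE_iff intro!: inv_into_into)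
    moreover have "coordinatewise I h v = u"
      using u h by (auto simp: v_def coordinatewise_def bij_betw_def PiE_iff extensional_def
          f_inv_into_f fun_eq_iff)
    ultimately show ?thesis by blast
  qed
  moreover have "coordinatewise I h ` PiE I (\<lambda>_. A) \<subseteq> PiE I (\<lambda>_. A)"
    using hA by (auto simp: coordinatewise_def PiE_iff)
  ultimately show ?thesis using inj by (auto simp: bij_betw_def)
qed

lemma fixed_points_coordinatewise:
  "{v \<in> PiE I (\<lambda>_. A). coordinatewise I h v = v} = PiE I (\<lambda>_. {u\<in>A. h u = u})"
  by (auto simp: coordinatewise_def PiE_iff fun_eq_iff extensional_def)

lemma card_PiE_slice:
  assumes "finite I" "i \<in> I" "B \<subseteq> A"
  shows "card {v \<in> PiE I (\<lambda>_. A). v i \<in> B} = card B * card A ^ (card I - 1)"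
proof -
  have "{v \<in> PiE I (\<lambda>_. A). v i \<in> B} = PiE I (\<lambda>j. if j = i then B else A)"
  proof
    show "{v \<in> PiE I (\<lambda>_. A). v i \<in> B} \<subseteq> PiE I (\<lambda>j. if j = i then B else A)"
      by (auto simp: PiE_iff extensional_def)
    show "PiE I (\<lambda>j. if j = i then B else A) \<subseteq> {v \<in> PiE I (\<lambda>_. A). v i \<in> B}"
      using assms(2,3) by (auto simp: PiE_iff) (metis subsetD)+
  qed
  hence "card {v \<in> PiE I (\<lambda>_. A). v i \<in> B} = (\<Prod>j\<in>I. card (if j = i then B else A))"
    using assms(1) by (simp add: card_PiE)
  also have "\<dots> = card B * (\<Prod>j\<in>I - {i}. card (if j = i then B else A))"
    using assms(1,2) by (simp add: prod.remove)
  also have "(\<Prod>j\<in>I - {i}. card (if j = i then B else A)) = (\<Prod>j\<in>I - {i}. card A)"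
    by (intro prod.cong) auto
  also have "\<dots> = card A ^ (card I - 1)" using assms(1,2) by simp
  finally show ?thesis .
qed

lemma card_filter_complement:
  assumes "finite V"
  shows "card {v\<in>V. P v} + card {v\<in>V. \<not> P v} = card V"
proof -
  have "{v\<in>V. P v} \<union> {v\<in>V. \<not> P v} = V" "{v\<in>V. P v} \<inter> {v\<in>V. \<not> P v} = {}" by auto
  thus ?thesis using assms by (metis card_Un_disjoint finite_Un)
qed

lemma card_bij_preimage:
  assumes "bij_betw e A V"
  shows "card {a\<in>A. P (e a)} = card {v\<in>V. P v}"
proof -
  have "inj_on e {a\<in>A. P (e a)}" using assms by (auto simp: bij_betw_def intro: inj_on_subset)
  moreover have "e ` {a\<in>A. P (e a)} = {v\<in>V. P v}" using assms by (auto simp: bij_betw_def)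
  ultimately show ?thesis by (metis card_image)
qed

text \<open>A sofic approximation of G for the finite set F with error eps on a finite set V,
  which may have any type.\<close>
definition sofic_approximation ::
    "('a, 'c) monoid_scheme \<Rightarrow> 'a set \<Rightarrow> real \<Rightarrow> 'v set \<Rightarrow> ('a \<Rightarrow> 'v \<Rightarrow> 'v) \<Rightarrow> bool" where
  "sofic_approximation G F \<epsilon> V \<sigma> \<longleftrightarrow>
     finite V \<and> V \<noteq> {} \<and> (\<forall>g \<in> carrier G. bij_betw (\<sigma> g) V V) \<and>
     (\<forall>g \<in> F. \<forall>h \<in> F.
        real (card {v \<in> V. \<sigma> (g \<otimes>\<^bsub>G\<^esub> h) v = \<sigma> g (\<sigma> h v)}) \<ge> (1 - \<epsilon>) * real (card V)) \<and>
     (\<forall>g \<in> F. g \<noteq> \<one>\<^bsub>G\<^esub> \<longrightarrow> real (card {v \<in> V. \<sigma> g v \<noteq> v}) \<ge> (1 - \<epsilon>) * real (card V))"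

lemma sofic_iff_approximations:
  "sofic G \<longleftrightarrow> (\<forall>F \<epsilon>. F \<subseteq> carrier G \<longrightarrow> finite F \<longrightarrow> \<epsilon> > 0 \<longrightarrow>
     (\<exists>(V :: nat set) \<sigma>. sofic_approximation G F \<epsilon> V \<sigma>))"
  unfolding sofic_def sofic_approximation_def by (rule refl)

lemma sofic_approximation_transfer:
  assumes G: "monoid G" "F \<subseteq> carrier G" and \<sigma>: "sofic_approximation G F \<epsilon> V \<sigma>"
    and e: "bij_betw e A V"
  shows "sofic_approximation G F \<epsilon> A (\<lambda>g a. inv_into A e (\<sigma> g (e a)))"
proof -
  define \<sigma>' where "\<sigma>' g a = inv_into A e (\<sigma> g (e a))" for g a
  have V: "finite V" "V \<noteq> {}" and bij: "\<And>g. g \<in> carrier G \<Longrightarrow> bij_betw (\<sigma> g) V V"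
    using \<sigma> by (simp_all add: sofic_approximation_def)
  have eA: "e a \<in> V" if "a \<in> A" for a using e that by (auto simp: bij_betw_def)
  have \<sigma>V: "\<sigma> g v \<in> V" if "g \<in> carrier G" "v \<in> V" for g v
    using bij[OF that(1)] that(2) by (auto simp: bij_betw_def)
  have inv_eq: "inv_into A e v = inv_into A e v' \<longleftrightarrow> v = v'" if "v \<in> V" "v' \<in> V" for v v'
    using e that by (metis bij_betw_inv_into_right)
  have inv_e: "inv_into A e (e a) = a" if "a \<in> A" for a
    using e that by (simp add: bij_betw_def)
  have cardA: "card A = card V" using e by (rule bij_betw_same_card)
  have "bij_betw (\<sigma>' g) A A" if g: "g \<in> carrier G" for g
  proof -
    have "bij_betw (inv_into A e \<circ> \<sigma> g \<circ> e) A A"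
      using bij_betw_trans[OF bij_betw_trans[OF e bij[OF g]] bij_betw_inv_into[OF e]]
      by (simp add: comp_assoc)
    thus ?thesis by (simp add: \<sigma>'_def[abs_def] comp_def)
  qed
  moreover have "card {a\<in>A. \<sigma>' (g \<otimes>\<^bsub>G\<^esub> h) a = \<sigma>' g (\<sigma>' h a)}
      = card {v\<in>V. \<sigma> (g \<otimes>\<^bsub>G\<^esub> h) v = \<sigma> g (\<sigma> h v)}" if "g \<in> F" "h \<in> F" for g h
  proof -
    have "g \<otimes>\<^bsub>G\<^esub> h \<in> carrier G" "g \<in> carrier G" "h \<in> carrier G"
      using that G by (auto intro: monoid.m_closed)
    hence "{a\<in>A. \<sigma>' (g \<otimes>\<^bsub>G\<^esub> h) a = \<sigma>' g (\<sigma>' h a)}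
        = {a\<in>A. (\<lambda>v. \<sigma> (g \<otimes>\<^bsub>G\<^esub> h) v = \<sigma> g (\<sigma> h v)) (e a)}"
      using eA by (auto simp: \<sigma>'_def bij_betw_inv_into_right[OF e] \<sigma>V inv_eq)
    thus ?thesis
      using card_bij_preimage[OF e, of "\<lambda>v. \<sigma> (g \<otimes>\<^bsub>G\<^esub> h) v = \<sigma> g (\<sigma> h v)"] by simp
  qed
  moreover have "card {a\<in>A. \<sigma>' g a \<noteq> a} = card {v\<in>V. \<sigma> g v \<noteq> v}" if "g \<in> F" for g
  proof -
    have "{a\<in>A. \<sigma>' g a \<noteq> a} = {a\<in>A. (\<lambda>v. \<sigma> g v \<noteq> v) (e a)}"
    proof (intro Collect_cong conj_cong refl)
      fix a assume "a \<in> A"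
      thus "(\<sigma>' g a \<noteq> a) = (\<sigma> g (e a) \<noteq> e a)"
        using inv_eq[of "\<sigma> g (e a)" "e a"] inv_e eA \<sigma>V that G(2) by (auto simp: \<sigma>'_def)
    qed
    thus ?thesis using card_bij_preimage[OF e, of "\<lambda>v. \<sigma> g v \<noteq> v"] by simp
  qed
  moreover have "finite A" "A \<noteq> {}" using e V by (auto simp: bij_betw_finite bij_betw_def)
  ultimately show ?thesis
    using \<sigma> cardA unfolding sofic_approximation_def \<sigma>'_def[symmetric] by simp
qed

lemma soficI:
  fixes G :: "('a, 'c) monoid_scheme"
  assumes G: "monoid G"
    and approx: "\<And>F \<epsilon>. F \<subseteq> carrier G \<Longrightarrow> finite F \<Longrightarrow> 0 < \<epsilon> \<Longrightarrow>
      \<exists>(V :: 'v set) \<sigma>. sofic_approximation G F \<epsilon> V \<sigma>"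
  shows "sofic G"
  unfolding sofic_iff_approximations
proof (intro allI impI)
  fix F \<epsilon> assume F: "F \<subseteq> carrier G" "finite F" and \<epsilon>: "(\<epsilon> :: real) > 0"
  obtain V :: "'v set" and \<sigma> where \<sigma>: "sofic_approximation G F \<epsilon> V \<sigma>" using approx F \<epsilon> by blast
  hence "finite V" by (simp add: sofic_approximation_def)
  then obtain e where e: "bij_betw e {0..<card V} V" using ex_bij_betw_nat_finite by blast
  from sofic_approximation_transfer[OF G F(1) \<sigma> e]
  show "\<exists>(V :: nat set) \<sigma>. sofic_approximation G F \<epsilon> V \<sigma>" by blast
qed

text \<open>Coordinatewise maps on tuples fail to compose only where some coordinate fails to.\<close>
lemma card_coordinatewise_defect:
  assumes V: "finite V" and I: "finite I"
  shows "card {v \<in> PiE I (\<lambda>_. V). coordinatewise I a v \<noteq> coordinatewise I b (coordinatewise I c v)}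
           \<le> card I * (card {u\<in>V. a u \<noteq> b (c u)} * card V ^ (card I - 1))"
proof -
  define B where "B = {u\<in>V. a u \<noteq> b (c u)}"
  define W where "W = PiE I (\<lambda>_. V)"
  have "{v\<in>W. coordinatewise I a v \<noteq> coordinatewise I b (coordinatewise I c v)}
      \<subseteq> (\<Union>i\<in>I. {v\<in>W. v i \<in> B})"
    by (auto simp: coordinatewise_def B_def W_def fun_eq_iff PiE_iff split: if_splits)
  hence "card {v\<in>W. coordinatewise I a v \<noteq> coordinatewise I b (coordinatewise I c v)}
      \<le> card (\<Union>i\<in>I. {v\<in>W. v i \<in> B})"
    using V I by (intro card_mono) (simp_all add: W_def finite_PiE)
  also have "\<dots> \<le> (\<Sum>i\<in>I. card {v\<in>W. v i \<in> B})" by (rule card_UN_le[OF I])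
  also have "\<dots> = (\<Sum>i\<in>I. card B * card V ^ (card I - 1))"
    using card_PiE_slice[OF I _, of _ B V] by (intro sum.cong) (simp_all add: W_def B_def)
  finally show ?thesis by (simp add: W_def B_def)
qed

text \<open>Amplification by tensor powers: the coordinatewise action on n-tuples multiplies the
  proportion of fixed points to its n-th power and the multiplicativity defect by at most n.\<close>
lemma sofic_approximation_power:
  fixes \<sigma> :: "'a \<Rightarrow> 'v \<Rightarrow> 'v" and G :: "('a, 'c) monoid_scheme"
  assumes V: "finite V" "V \<noteq> {}" and bij: "\<And>g. g \<in> carrier G \<Longrightarrow> bij_betw (\<sigma> g) V V"
    and mult: "\<And>g h. g \<in> F \<Longrightarrow> h \<in> F \<Longrightarrow>
      real (card {v\<in>V. \<sigma> (g \<otimes>\<^bsub>G\<^esub> h) v \<noteq> \<sigma> g (\<sigma> h v)}) \<le> \<delta> * real (card V)"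
    and free: "\<And>g. g \<in> F \<Longrightarrow> g \<noteq> \<one>\<^bsub>G\<^esub> \<Longrightarrow> real (card {v\<in>V. \<sigma> g v = v}) \<le> r * real (card V)"
    and n: "0 < n" "real n * \<delta> \<le> \<epsilon>" and r: "0 \<le> r" "r ^ n \<le> \<epsilon>"
  shows "sofic_approximation G F \<epsilon> (PiE {..<n} (\<lambda>_. V)) (\<lambda>g. coordinatewise {..<n} (\<sigma> g))"
proof -
  define I where "I = {..<n}"
  define W where "W = PiE I (\<lambda>_. V)"
  define \<sigma>' where "\<sigma>' g = coordinatewise I (\<sigma> g)" for g
  have fW: "finite W" using V by (simp add: W_def I_def finite_PiE)
  have cardW: "card W = card V ^ n" by (simp add: W_def I_def card_PiE)
  have "W \<noteq> {}" using V by (simp add: W_def PiE_eq_empty_iff)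
  moreover have "bij_betw (\<sigma>' g) W W" if "g \<in> carrier G" for g
    unfolding \<sigma>'_def W_def by (rule bij_betw_coordinatewise[OF bij[OF that]])
  moreover have "real (card {v\<in>W. \<sigma>' (g \<otimes>\<^bsub>G\<^esub> h) v = \<sigma>' g (\<sigma>' h v)}) \<ge> (1 - \<epsilon>) * real (card W)"
    if g: "g \<in> F" and h: "h \<in> F" for g h
  proof -
    define B where "B = {u\<in>V. \<sigma> (g \<otimes>\<^bsub>G\<^esub> h) u \<noteq> \<sigma> g (\<sigma> h u)}"
    have "card {v\<in>W. \<sigma>' (g \<otimes>\<^bsub>G\<^esub> h) v \<noteq> \<sigma>' g (\<sigma>' h v)} \<le> n * (card B * card V ^ (n - 1))"
      using card_coordinatewise_defect[OF V(1), of I] unfolding W_def \<sigma>'_def B_def I_def by simp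
    hence "real (card {v\<in>W. \<sigma>' (g \<otimes>\<^bsub>G\<^esub> h) v \<noteq> \<sigma>' g (\<sigma>' h v)})
        \<le> real (n * (card B * card V ^ (n - 1)))" by (simp only: of_nat_le_iff)
    also have "\<dots> = real n * (real (card B) * real (card V) ^ (n - 1))" by simp
    also have "\<dots> \<le> real n * ((\<delta> * real (card V)) * real (card V) ^ (n - 1))"
      using mult[OF g h] unfolding B_def by (intro mult_left_mono mult_right_mono) auto
    also have "\<dots> = (real n * \<delta>) * (real (card V) * real (card V) ^ (n - 1))" by simp
    also have "real (card V) * real (card V) ^ (n - 1) = real (card W)"
      using n(1) by (simp add: cardW power_Suc[symmetric])
    also have "(real n * \<delta>) * real (card W) \<le> \<epsilon> * real (card W)"
      using n(2) by (intro mult_right_mono) auto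
    finally show ?thesis
      using card_filter_complement[OF fW, of "\<lambda>v. \<sigma>' (g \<otimes>\<^bsub>G\<^esub> h) v = \<sigma>' g (\<sigma>' h v)"]
      by (simp add: algebra_simps)
  qed
  moreover have "real (card {v\<in>W. \<sigma>' g v \<noteq> v}) \<ge> (1 - \<epsilon>) * real (card W)"
    if g: "g \<in> F" "g \<noteq> \<one>\<^bsub>G\<^esub>" for g
  proof -
    have "card {v\<in>W. \<sigma>' g v = v} = card {u\<in>V. \<sigma> g u = u} ^ n"
      unfolding W_def \<sigma>'_def fixed_points_coordinatewise by (simp add: I_def card_PiE)
    hence "real (card {v\<in>W. \<sigma>' g v = v}) = real (card {u\<in>V. \<sigma> g u = u}) ^ n" by simp
    also have "\<dots> \<le> (r * real (card V)) ^ n" by (intro power_mono free[OF g]) auto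
    also have "\<dots> = r ^ n * real (card W)" by (simp add: cardW power_mult_distrib)
    also have "\<dots> \<le> \<epsilon> * real (card W)" using r(2) by (intro mult_right_mono) auto
    finally show ?thesis
      using card_filter_complement[OF fW, of "\<lambda>v. \<sigma>' g v = v"] by (simp add: algebra_simps)
  qed
  ultimately show ?thesis using fW
    unfolding sofic_approximation_def I_def[symmetric] W_def[symmetric] \<sigma>'_def[symmetric] by blast
qed

definition weight_loss :: "'b set \<Rightarrow> ('b \<Rightarrow> nat) \<Rightarrow> ('b \<Rightarrow> 'b) \<Rightarrow> nat" where
  "weight_loss Z w f = (\<Sum>x\<in>Z. w x - w (f x))"

text \<open>The finite set in which every point x of Z occurs with multiplicity w x.\<close>
definition copies :: "'b set \<Rightarrow> ('b \<Rightarrow> nat) \<Rightarrow> ('b \<times> nat) set" where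
  "copies Z w = Sigma Z (\<lambda>x. {..<w x})"

lemma card_copies: "finite Z \<Longrightarrow> card (copies Z w) = (\<Sum>x\<in>Z. w x)"
  by (simp add: copies_def card_SigmaI)

lemma card_copies_unmovable:
  assumes "finite Z"
  shows "card {u \<in> copies Z w. \<not> snd u < w (f (fst u))} = weight_loss Z w f"
proof -
  have "{u \<in> copies Z w. \<not> snd u < w (f (fst u))} = Sigma Z (\<lambda>x. {w (f x)..<w x})"
    by (auto simp: copies_def)
  thus ?thesis using assms by (simp add: card_SigmaI weight_loss_def)
qed

lemma card_copies_fixed:
  assumes "finite Z"
  shows "card {u \<in> copies Z w. f (fst u) = fst u} = (\<Sum>x\<in>{x\<in>Z. f x = x}. w x)"
proof -
  have "{u \<in> copies Z w. f (fst u) = fst u} = Sigma {x\<in>Z. f x = x} (\<lambda>x. {..<w x})"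
    by (auto simp: copies_def)
  thus ?thesis using assms by (simp add: card_SigmaI)
qed

context mean_preserving_action
begin

text \<open>The action moves copies of points as long as the target point has enough copies;
  these partial bijections extend to permutations of all copies.\<close>
lemma weighted_action:
  fixes w :: "'b \<Rightarrow> nat"
  assumes Z: "finite Z" "Z \<subseteq> X" and w: "\<And>x. x \<notin> Z \<Longrightarrow> w x = 0"
  obtains \<tau> where "\<And>g. g \<in> carrier G \<Longrightarrow> bij_betw (\<tau> g) (copies Z w) (copies Z w)"
    "\<And>g u. g \<in> carrier G \<Longrightarrow> u \<in> copies Z w \<Longrightarrow> snd u < w (\<phi> g (fst u)) \<Longrightarrow>
       \<tau> g u = (\<phi> g (fst u), snd u)"
proof -
  define V where "V = copies Z w"
  define D where "D g = {u\<in>V. snd u < w (\<phi> g (fst u))}" for g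
  define move where "move g u = (\<phi> g (fst u), snd u :: nat)" for g u
  have "\<exists>h. bij_betw h V V \<and> (\<forall>u\<in>D g. h u = move g u)" if g: "g \<in> carrier G" for g
  proof (rule extend_to_bijection)
    show "finite V" using Z by (simp add: V_def copies_def)
    show "D g \<subseteq> V" by (auto simp: D_def)
    show "inj_on (move g) (D g)"
    proof (rule inj_onI)
      fix u v assume "u \<in> D g" "v \<in> D g" "move g u = move g v"
      moreover have "fst u \<in> X" "fst v \<in> X" using \<open>u \<in> D g\<close> \<open>v \<in> D g\<close> Z
        by (auto simp: D_def V_def copies_def)
      ultimately show "u = v" using act_bij[OF g]
        by (auto simp: move_def bij_betw_def prod_eq_iff dest: inj_onD)
    qed
    show "move g ` D g \<subseteq> V"
    proof
      fix v assume "v \<in> move g ` D g"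
      then obtain u where u: "u \<in> D g" "v = move g u" by blast
      hence "\<phi> g (fst u) \<in> Z" using w by (auto simp: D_def) (metis less_nat_zero_code)
      thus "v \<in> V" using u by (auto simp: move_def D_def V_def copies_def)
    qed
  qed
  then obtain \<tau> where \<tau>: "\<And>g. g \<in> carrier G \<Longrightarrow> bij_betw (\<tau> g) V V \<and> (\<forall>u\<in>D g. \<tau> g u = move g u)"
    by metis
  show ?thesis
  proof (rule that)
    show "bij_betw (\<tau> g) (copies Z w) (copies Z w)" if "g \<in> carrier G" for g
      using \<tau>[OF that] by (simp add: V_def)
    show "\<tau> g u = (\<phi> g (fst u), snd u)"
      if "g \<in> carrier G" "u \<in> copies Z w" "snd u < w (\<phi> g (fst u))" for g u
      using \<tau>[OF that(1)] that(2,3) unfolding V_def D_def move_def by blast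
  qed
qed

text \<open>Copies at which the permutations fail to compose are copies that could not be moved.\<close>
lemma weighted_action_defect:
  fixes w :: "'b \<Rightarrow> nat"
  assumes Z: "finite Z" "Z \<subseteq> X" and g: "g \<in> carrier G" and h: "h \<in> carrier G"
    and bij: "\<And>g. g \<in> carrier G \<Longrightarrow> bij_betw (\<tau> g) (copies Z w) (copies Z w)"
    and move: "\<And>g u. g \<in> carrier G \<Longrightarrow> u \<in> copies Z w \<Longrightarrow> snd u < w (\<phi> g (fst u)) \<Longrightarrow>
       \<tau> g u = (\<phi> g (fst u), snd u)"
  shows "card {u \<in> copies Z w. \<tau> (g \<otimes> h) u \<noteq> \<tau> g (\<tau> h u)}
           \<le> weight_loss Z w (\<phi> h) + weight_loss Z w (\<phi> (g \<otimes> h))"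
proof -
  have gh: "g \<otimes> h \<in> carrier G" using g h by (rule mult_closed)
  have "{u \<in> copies Z w. \<tau> (g \<otimes> h) u \<noteq> \<tau> g (\<tau> h u)}
      \<subseteq> {u \<in> copies Z w. \<not> snd u < w (\<phi> h (fst u))} \<union> {u \<in> copies Z w. \<not> snd u < w (\<phi> (g \<otimes> h) (fst u))}"
  proof (rule subsetI, rule ccontr)
    fix u assume u: "u \<in> {u \<in> copies Z w. \<tau> (g \<otimes> h) u \<noteq> \<tau> g (\<tau> h u)}"
      and "u \<notin> {u \<in> copies Z w. \<not> snd u < w (\<phi> h (fst u))} \<union> {u \<in> copies Z w. \<not> snd u < w (\<phi> (g \<otimes> h) (fst u))}"
    hence uV: "u \<in> copies Z w" and 1: "snd u < w (\<phi> h (fst u))" and 2: "snd u < w (\<phi> (g \<otimes> h) (fst u))"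
      by auto
    have comp: "\<phi> (g \<otimes> h) (fst u) = \<phi> g (\<phi> h (fst u))"
      using uV Z act_mult[OF g h] by (auto simp: copies_def)
    have hu: "\<tau> h u = (\<phi> h (fst u), snd u)" using move[OF h uV 1] .
    have "\<tau> h u \<in> copies Z w" using bij[OF h] uV by (auto simp: bij_betw_def)
    hence "\<tau> g (\<tau> h u) = (\<phi> g (\<phi> h (fst u)), snd u)" using move[OF g] 2 comp hu by simp
    moreover have "\<tau> (g \<otimes> h) u = (\<phi> g (\<phi> h (fst u)), snd u)" using move[OF gh uV 2] comp by simp
    ultimately show False using u by simp
  qed
  hence "card {u \<in> copies Z w. \<tau> (g \<otimes> h) u \<noteq> \<tau> g (\<tau> h u)}
      \<le> card ({u \<in> copies Z w. \<not> snd u < w (\<phi> h (fst u))} \<union> {u \<in> copies Z w. \<not> snd u < w (\<phi> (g \<otimes> h) (fst u))})"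
    using Z(1) by (intro card_mono) (simp_all add: copies_def)
  also have "\<dots> \<le> card {u \<in> copies Z w. \<not> snd u < w (\<phi> h (fst u))} + card {u \<in> copies Z w. \<not> snd u < w (\<phi> (g \<otimes> h) (fst u))}"
    by (rule card_Un_le)
  finally show ?thesis using Z(1) by (simp add: card_copies_unmovable)
qed

text \<open>A copy fixed by a permutation either sits over a fixed point or could not be moved.\<close>
lemma weighted_action_fixed_points:
  fixes w :: "'b \<Rightarrow> nat"
  assumes Z: "finite Z"
    and move: "\<And>u. u \<in> copies Z w \<Longrightarrow> snd u < w (\<phi> g (fst u)) \<Longrightarrow> \<tau> u = (\<phi> g (fst u), snd u)"
  shows "card {u \<in> copies Z w. \<tau> u = u} \<le> (\<Sum>x\<in>{x\<in>Z. \<phi> g x = x}. w x) + weight_loss Z w (\<phi> g)"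
proof -
  have "{u \<in> copies Z w. \<tau> u = u}
      \<subseteq> {u \<in> copies Z w. \<phi> g (fst u) = fst u} \<union> {u \<in> copies Z w. \<not> snd u < w (\<phi> g (fst u))}"
    using move by (auto simp: prod_eq_iff)
  hence "card {u \<in> copies Z w. \<tau> u = u}
      \<le> card ({u \<in> copies Z w. \<phi> g (fst u) = fst u} \<union> {u \<in> copies Z w. \<not> snd u < w (\<phi> g (fst u))})"
    using Z by (intro card_mono) (simp_all add: copies_def)
  also have "\<dots> \<le> card {u \<in> copies Z w. \<phi> g (fst u) = fst u} + card {u \<in> copies Z w. \<not> snd u < w (\<phi> g (fst u))}"
    by (rule card_Un_le)
  finally show ?thesis using Z by (simp add: card_copies_unmovable card_copies_fixed)
qed

end

text \<open>Rounding N times a probability vector down to integer weights loses at most one unit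
  per point of the support.\<close>
lemma rounded_weights:
  fixes \<nu> :: "'b \<Rightarrow> real" and N :: nat
  assumes Z: "finite Z" and \<nu>: "probability_on Z \<nu>" and w: "w = (\<lambda>x. nat \<lfloor>real N * \<nu> x\<rfloor>)"
  shows "\<And>x. x \<notin> Z \<Longrightarrow> w x = 0"
    and "real N - real (card Z) \<le> real (\<Sum>x\<in>Z. w x)"
    and "\<And>A. real (\<Sum>x\<in>A. w x) \<le> real N * sum \<nu> A"
    and "\<And>f. real (weight_loss Z w f) \<le> real N * (\<Sum>x\<in>Z. \<bar>\<nu> (f x) - \<nu> x\<bar>) + real (card Z)"
proof -
  have nonneg: "0 \<le> real N * \<nu> x" for x using \<nu> by (simp add: probability_on_def)
  have below: "real (w x) \<le> real N * \<nu> x" for x unfolding w using nonneg[of x] by linarith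
  have above: "real N * \<nu> x - 1 \<le> real (w x)" for x unfolding w using nonneg[of x] by linarith
  show "w x = 0" if "x \<notin> Z" for x using \<nu> that by (simp add: w probability_on_def)
  have "(\<Sum>x\<in>Z. real N * \<nu> x - 1) \<le> (\<Sum>x\<in>Z. real (w x))" by (intro sum_mono above)
  thus "real N - real (card Z) \<le> real (\<Sum>x\<in>Z. w x)"
    using \<nu> by (simp add: sum_subtractf sum_distrib_left[symmetric] probability_on_def)
  show "real (\<Sum>x\<in>A. w x) \<le> real N * sum \<nu> A" for A
    using sum_mono[of A "\<lambda>x. real (w x)", OF below] by (simp add: sum_distrib_left)
  show "real (weight_loss Z w f) \<le> real N * (\<Sum>x\<in>Z. \<bar>\<nu> (f x) - \<nu> x\<bar>) + real (card Z)" for f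
  proof -
    have "real (w x - w (f x)) \<le> real N * \<bar>\<nu> (f x) - \<nu> x\<bar> + 1" for x
    proof (cases "w (f x) \<le> w x")
      case True
      hence "real (w x - w (f x)) = real (w x) - real (w (f x))" by simp
      also have "\<dots> \<le> real N * (\<nu> x - \<nu> (f x)) + 1"
        using below[of x] above[of "f x"] by (simp add: algebra_simps)
      also have "\<dots> \<le> real N * \<bar>\<nu> (f x) - \<nu> x\<bar> + 1" by (intro add_mono mult_left_mono) auto
      finally show ?thesis .
    qed simp
    hence "(\<Sum>x\<in>Z. real (w x - w (f x))) \<le> (\<Sum>x\<in>Z. real N * \<bar>\<nu> (f x) - \<nu> x\<bar> + 1)"
      by (intro sum_mono)
    thus ?thesis by (simp add: weight_loss_def sum.distrib sum_distrib_left)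
  qed
qed

text \<open>With N of order card Z / c, the rounding errors are at most c N, and the total weight
  is at least (1 - c) N.\<close>
lemma scaled_rounded_weights:
  fixes \<nu> :: "'b \<Rightarrow> real"
  assumes Z: "finite Z" and \<nu>: "probability_on Z \<nu>" and c: "0 < c" "c < 1"
  shows "\<exists>(N :: nat) (w :: 'b \<Rightarrow> nat). (\<forall>x. x \<notin> Z \<longrightarrow> w x = 0) \<and> 0 < (\<Sum>x\<in>Z. w x) \<and>
    real N \<le> real (\<Sum>x\<in>Z. w x) / (1 - c) \<and> (\<forall>A. real (\<Sum>x\<in>A. w x) \<le> real N * sum \<nu> A) \<and>
    (\<forall>f. real (weight_loss Z w f) \<le> real N * ((\<Sum>x\<in>Z. \<bar>\<nu> (f x) - \<nu> x\<bar>) + c))"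
proof -
  define N :: nat where "N = nat \<lceil>real (card Z) / c\<rceil> + card Z + 1"
  have Nc: "real (card Z) \<le> real N * c"
  proof -
    have "real (card Z) / c \<le> real N" unfolding N_def by linarith
    thus ?thesis using c(1) by (simp add: field_simps)
  qed
  have N_pos: "real (card Z) < real N" unfolding N_def by simp
  define w :: "'b \<Rightarrow> nat" where "w = (\<lambda>x. nat \<lfloor>real N * \<nu> x\<rfloor>)"
  note rounded = rounded_weights[OF Z \<nu> w_def]
  have "real N * (1 - c) \<le> real (\<Sum>x\<in>Z. w x)" using rounded(2) Nc by (simp add: algebra_simps)
  hence "real N \<le> real (\<Sum>x\<in>Z. w x) / (1 - c)" using c by (simp add: field_simps)
  moreover have "0 < (\<Sum>x\<in>Z. w x)" using rounded(2) N_pos by linarith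
  moreover have "real (weight_loss Z w f) \<le> real N * ((\<Sum>x\<in>Z. \<bar>\<nu> (f x) - \<nu> x\<bar>) + c)" for f
    using rounded(4)[of f] Nc by (simp add: algebra_simps)
  ultimately show ?thesis using rounded(1,3) by blast
qed

context mean_preserving_action
begin

lemma permutations_from_probability:
  assumes Z: "finite Z" "Z \<subseteq> X" and \<nu>: "probability_on Z \<nu>"
    and S: "S \<subseteq> carrier G" "finite S" and c: "0 < c" "c \<le> 1/2"
    and defect: "translation_defect S (translates S Z) \<nu> < c"
  shows "\<exists>(V :: ('b \<times> nat) set) \<tau>. finite V \<and> V \<noteq> {} \<and> (\<forall>g\<in>carrier G. bij_betw (\<tau> g) V V) \<and>
    (\<forall>g\<in>carrier G. \<forall>h\<in>S. g \<otimes> h \<in> S \<longrightarrow>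
       real (card {v\<in>V. \<tau> (g \<otimes> h) v \<noteq> \<tau> g (\<tau> h v)}) \<le> 8 * c * real (card V)) \<and>
    (\<forall>g\<in>S. real (card {v\<in>V. \<tau> g v = v}) \<le> (sum \<nu> {x\<in>Z. \<phi> g x = x} + 2 * c) / (1 - c) * real (card V))"
proof -
  obtain N :: nat and w :: "'b \<Rightarrow> nat" where w_out: "\<forall>x. x \<notin> Z \<longrightarrow> w x = 0"
    and w_pos: "0 < (\<Sum>x\<in>Z. w x)" and N_le: "real N \<le> real (\<Sum>x\<in>Z. w x) / (1 - c)"
    and w_le: "\<forall>A. real (\<Sum>x\<in>A. w x) \<le> real N * sum \<nu> A"
    and w_loss: "\<forall>f. real (weight_loss Z w f) \<le> real N * ((\<Sum>x\<in>Z. \<bar>\<nu> (f x) - \<nu> x\<bar>) + c)"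
    using scaled_rounded_weights[OF Z(1) \<nu> c(1)] c(2) by (auto elim!: exE)
  define V where "V = copies Z w"
  have cardV: "card V = (\<Sum>x\<in>Z. w x)" using Z(1) by (simp add: V_def card_copies)
  hence "V \<noteq> {}" using w_pos by auto
  have loss: "real (weight_loss Z w (\<phi> s)) \<le> 2 * real N * c" if "s \<in> S" for s
  proof -
    have "(\<Sum>x\<in>Z. \<bar>\<nu> (\<phi> s x) - \<nu> x\<bar>) \<le> (\<Sum>y\<in>translates S Z. \<bar>\<nu> (\<phi> s y) - \<nu> y\<bar>)"
      using Z S by (intro sum_mono2 finite_translates) (auto simp: translates_def)
    also have "\<dots> \<le> translation_defect S (translates S Z) \<nu>"
      unfolding translation_defect_def using S(2) that by (intro member_le_sum) (auto intro: sum_nonneg)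
    finally have "real N * ((\<Sum>x\<in>Z. \<bar>\<nu> (\<phi> s x) - \<nu> x\<bar>) + c) \<le> real N * (c + c)"
      using defect by (intro mult_left_mono) auto
    moreover have "real N * (c + c) = 2 * real N * c" by simp
    ultimately show ?thesis using w_loss[rule_format, of "\<phi> s"] by linarith
  qed
  obtain \<tau> where bij: "\<And>g. g \<in> carrier G \<Longrightarrow> bij_betw (\<tau> g) V V"
    and move: "\<And>g u. g \<in> carrier G \<Longrightarrow> u \<in> V \<Longrightarrow> snd u < w (\<phi> g (fst u)) \<Longrightarrow>
      \<tau> g u = (\<phi> g (fst u), snd u)"
    using weighted_action[OF Z, where w = w] w_out unfolding V_def by blast
  have "real (card {v\<in>V. \<tau> (g \<otimes> h) v \<noteq> \<tau> g (\<tau> h v)}) \<le> 8 * c * real (card V)"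
    if g: "g \<in> carrier G" and h: "h \<in> S" and gh: "g \<otimes> h \<in> S" for g h
  proof -
    have "card {v\<in>V. \<tau> (g \<otimes> h) v \<noteq> \<tau> g (\<tau> h v)}
        \<le> weight_loss Z w (\<phi> h) + weight_loss Z w (\<phi> (g \<otimes> h))"
      unfolding V_def
      by (rule weighted_action_defect[OF Z g, where h = h and \<tau> = \<tau>])
        (use h S(1) bij move in \<open>auto simp: V_def\<close>)
    hence "real (card {v\<in>V. \<tau> (g \<otimes> h) v \<noteq> \<tau> g (\<tau> h v)})
        \<le> real (weight_loss Z w (\<phi> h)) + real (weight_loss Z w (\<phi> (g \<otimes> h)))"
      by linarith
    also have "\<dots> \<le> 2 * real N * c + 2 * real N * c" using loss[OF h] loss[OF gh] by linarith
    also have "\<dots> = 4 * c * real N" by simp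
    also have "\<dots> \<le> 4 * c * (real (card V) / (1 - c))"
      using N_le c cardV by (intro mult_left_mono) auto
    also have "\<dots> \<le> 8 * c * real (card V)"
    proof -
      have "(c * 2) * real (card V) \<le> 1 * real (card V)" using c by (intro mult_right_mono) auto
      hence "real (card V) / (1 - c) \<le> 2 * real (card V)" using c by (simp add: field_simps)
      hence "(4 * c) * (real (card V) / (1 - c)) \<le> (4 * c) * (2 * real (card V))"
        using c by (intro mult_left_mono) auto
      thus ?thesis by simp
    qed
    finally show ?thesis .
  qed
  moreover have "real (card {v\<in>V. \<tau> g v = v}) \<le> (sum \<nu> {x\<in>Z. \<phi> g x = x} + 2 * c) / (1 - c) * real (card V)"
    if g: "g \<in> S" for g
  proof -
    have "card {v\<in>V. \<tau> g v = v} \<le> (\<Sum>x\<in>{x\<in>Z. \<phi> g x = x}. w x) + weight_loss Z w (\<phi> g)"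
      unfolding V_def
      by (rule weighted_action_fixed_points[OF Z(1), where g = g and \<tau> = "\<tau> g"])
        (use g S(1) move in \<open>auto simp: V_def\<close>)
    hence "real (card {v\<in>V. \<tau> g v = v})
        \<le> real (\<Sum>x\<in>{x\<in>Z. \<phi> g x = x}. w x) + real (weight_loss Z w (\<phi> g))"
      by linarith
    also have "\<dots> \<le> real N * sum \<nu> {x\<in>Z. \<phi> g x = x} + 2 * real N * c"
      using w_le loss[OF g] by (intro add_mono) auto
    also have "\<dots> = real N * (sum \<nu> {x\<in>Z. \<phi> g x = x} + 2 * c)" by (simp add: algebra_simps)
    also have "\<dots> \<le> real (card V) / (1 - c) * (sum \<nu> {x\<in>Z. \<phi> g x = x} + 2 * c)"
      using N_le cardV c \<nu> by (intro mult_right_mono add_nonneg_nonneg sum_nonneg)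
        (auto simp: probability_on_def)
    finally show ?thesis by (simp add: field_simps)
  qed
  ultimately show ?thesis using Z(1) \<open>V \<noteq> {}\<close> bij
    by (intro exI[of _ V] exI[of _ \<tau>]) (simp add: V_def copies_def)
qed

end

text \<open>Choice of the parameters: given q < 1 and eps > 0, a tensor power n and a precision c
  such that the proportion (q + 2c)/(1 - c) of fixed points stays below r = (1 + q)/2,
  r^n <= eps, and the n-fold multiplicativity defect 8 c n stays below eps.\<close>
lemma amplification_parameters:
  fixes q \<epsilon> :: real
  assumes q: "0 \<le> q" "q < 1" and \<epsilon>: "0 < \<epsilon>"
  shows "\<exists>n c. 0 < n \<and> 0 < c \<and> c \<le> 1/2 \<and> 8 * real n * c \<le> \<epsilon> \<and> ((1 + q) / 2) ^ n \<le> \<epsilon> \<and>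
           (q + 2 * c) / (1 - c) \<le> (1 + q) / 2"
proof -
  define r where "r = (1 + q) / 2"
  have r: "0 \<le> r" "r < 1" using q by (simp_all add: r_def)
  then obtain n0 where "r ^ n0 < \<epsilon>" using real_arch_pow_inv[OF \<epsilon>] by blast
  define n where "n = Suc n0"
  have "r ^ n = r * r ^ n0" by (simp add: n_def)
  also have "\<dots> \<le> r ^ n0" using r by (simp add: mult_left_le_one_le)
  finally have r_n: "r ^ n \<le> \<epsilon>" using \<open>r ^ n0 < \<epsilon>\<close> by simp
  define c where "c = min (min ((1 - q) / 8) (\<epsilon> / (8 * real n))) (1/2)"
  have "0 < c" using q \<epsilon> by (simp add: c_def n_def)
  moreover have "c \<le> (1 - q) / 8" unfolding c_def by (meson min.cobounded1 order_trans)
  moreover have "c \<le> 1/2" unfolding c_def by (rule min.cobounded2)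
  moreover have "c \<le> \<epsilon> / (8 * real n)" unfolding c_def by (meson min.cobounded1 min.cobounded2 order_trans)
  ultimately have c: "0 < c" "c \<le> (1 - q) / 8" "c \<le> 1/2" "c \<le> \<epsilon> / (8 * real n)" by auto
  have "q + 2 * c \<le> (1 + q) / 2 - c" using c(1,2) by (simp add: field_simps)
  also have "\<dots> \<le> (1 + q) / 2 - (c + c * q) / 2"
    using c(1) q(2) mult_left_le[of q c] by (simp add: field_simps)
  also have "\<dots> = r * (1 - c)" by (simp add: r_def field_simps)
  finally have "(q + 2 * c) / (1 - c) \<le> r" using c(3) by (simp add: pos_divide_le_eq)
  moreover have "8 * real n * c \<le> \<epsilon>" using c(4) by (simp add: n_def field_simps)
  moreover have "0 < n" by (simp add: n_def)
  ultimately show ?thesis using c(1,3) r_n unfolding r_def by blast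
qed

context mean_preserving_action
begin

lemma strongly_faithful_uniform:
  assumes faithful: "strongly_faithful G X \<phi> \<mu>" and F: "finite F" "F \<subseteq> carrier G - {\<one>}"
  shows "\<exists>q. 0 \<le> q \<and> q < 1 \<and> (\<forall>g\<in>F. \<mu> {x\<in>X. \<phi> g x = x} \<le> q)"
proof (intro exI conjI)
  let ?q = "Max (insert 0 ((\<lambda>g. \<mu> {x\<in>X. \<phi> g x = x}) ` F))"
  show "0 \<le> ?q" "\<forall>g\<in>F. \<mu> {x\<in>X. \<phi> g x = x} \<le> ?q" using F(1) by auto
  have "?q \<in> insert 0 ((\<lambda>g. \<mu> {x\<in>X. \<phi> g x = x}) ` F)" using F(1) by (intro Max_in) auto
  thus "?q < 1" using faithful F(2) unfolding strongly_faithful_def by auto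
qed

text \<open>For finite F and eps > 0: the fixed point sets of the elements of F other than 1 have
  mean at most some q < 1; an almost invariant probability vector respecting these sets
  gives permutations with a proportion of at most r = (1 + q)/2 of fixed points, and the
  n-th tensor power pushes this below eps.\<close>
theorem sofic_approximation_exists:
  assumes X: "countable X" and faithful: "strongly_faithful G X \<phi> \<mu>"
    and F: "F \<subseteq> carrier G" "finite F" and \<epsilon>: "0 < \<epsilon>"
  shows "\<exists>(V :: (nat \<Rightarrow> 'b \<times> nat) set) \<sigma>. sofic_approximation G F \<epsilon> V \<sigma>"
proof -
  define F1 where "F1 = F - {\<one>}"
  define Fix where "Fix g = {x\<in>X. \<phi> g x = x}" for g
  have F1: "finite F1" "F1 \<subseteq> carrier G - {\<one>}" using F by (auto simp: F1_def)
  obtain q where q: "0 \<le> q" "q < 1" "\<forall>g\<in>F1. \<mu> (Fix g) \<le> q"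
    using strongly_faithful_uniform[OF faithful F1] unfolding Fix_def by blast
  obtain n c where n: "0 < n" and c: "0 < c" "c \<le> 1/2" "8 * real n * c \<le> \<epsilon>"
    and r_n: "((1 + q) / 2) ^ n \<le> \<epsilon>" and r: "(q + 2 * c) / (1 - c) \<le> (1 + q) / 2"
    using amplification_parameters[OF q(1,2) \<epsilon>] by blast
  define S where "S = F \<union> (\<lambda>(g, h). g \<otimes> h) ` (F \<times> F)"
  have S: "S \<subseteq> carrier G" "finite S" using F by (auto simp: S_def intro: mult_closed)
  have "\<exists>Z \<nu>. finite Z \<and> Z \<subseteq> X \<and> \<nu> \<in> constrained_probabilities Z F1 Fix \<and>
      translation_defect S (translates S Z) \<nu> < c"
    by (rule approximately_invariant_probability[OF X S(2) S(1) F1(1) _ c(1)]) (simp add: Fix_def)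
  then obtain Z \<nu> where Z: "finite Z" "Z \<subseteq> X" and \<nu>: "\<nu> \<in> constrained_probabilities Z F1 Fix"
    and defect: "translation_defect S (translates S Z) \<nu> < c"
    by (elim exE conjE)
  have "probability_on Z \<nu>" using \<nu> by (simp add: constrained_probabilities_def)
  from permutations_from_probability[OF Z this S c(1,2) defect]
  obtain V :: "('b \<times> nat) set" and \<tau> where V: "finite V" "V \<noteq> {}"
    and bij: "\<forall>g\<in>carrier G. bij_betw (\<tau> g) V V"
    and mult: "\<forall>g\<in>carrier G. \<forall>h\<in>S. g \<otimes> h \<in> S \<longrightarrow>
       real (card {v\<in>V. \<tau> (g \<otimes> h) v \<noteq> \<tau> g (\<tau> h v)}) \<le> 8 * c * real (card V)"
    and fixed: "\<forall>g\<in>S. real (card {v\<in>V. \<tau> g v = v})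
       \<le> (sum \<nu> {x\<in>Z. \<phi> g x = x} + 2 * c) / (1 - c) * real (card V)"
    by (elim exE conjE)
  have "real (card {v\<in>V. \<tau> g v = v}) \<le> (1 + q) / 2 * real (card V)" if g: "g \<in> F" "g \<noteq> \<one>" for g
  proof -
    have "sum \<nu> {x\<in>Z. \<phi> g x = x} = sum \<nu> (Z \<inter> Fix g)" using Z(2) by (auto simp: Fix_def intro: sum.cong)
    also have "\<dots> \<le> q" using \<nu> q(3) g by (force simp: constrained_probabilities_def F1_def)
    finally have "(sum \<nu> {x\<in>Z. \<phi> g x = x} + 2 * c) / (1 - c) \<le> (q + 2 * c) / (1 - c)"
      using c(2) by (intro divide_right_mono) auto
    also note r
    finally have "(sum \<nu> {x\<in>Z. \<phi> g x = x} + 2 * c) / (1 - c) \<le> (1 + q) / 2" .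
    hence "(sum \<nu> {x\<in>Z. \<phi> g x = x} + 2 * c) / (1 - c) * real (card V) \<le> (1 + q) / 2 * real (card V)"
      by (rule mult_right_mono) simp
    moreover have "g \<in> S" using g by (simp add: S_def)
    ultimately show ?thesis using fixed by (meson order_trans)
  qed
  moreover have "real (card {v\<in>V. \<tau> (g \<otimes> h) v \<noteq> \<tau> g (\<tau> h v)}) \<le> 8 * c * real (card V)"
    if "g \<in> F" "h \<in> F" for g h
    using mult that F unfolding S_def by blast
  ultimately have "sofic_approximation G F \<epsilon> (PiE {..<n} (\<lambda>_. V)) (\<lambda>g. coordinatewise {..<n} (\<tau> g))"
    using bij c(3) q(1) r_n n
    by (intro sofic_approximation_power[OF V, where \<delta> = "8 * c" and r = "(1 + q) / 2"])
      (auto simp: algebra_simps)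
  thus ?thesis by blast
qed

end

theorem proposition5p1:
  fixes G :: "('a, 'c) monoid_scheme" and X :: "'b set"
    and \<phi> :: "'a \<Rightarrow> 'b \<Rightarrow> 'b" and \<mu> :: "'b set \<Rightarrow> real"
  assumes "group G" and "countable (carrier G)"
    and "countable X"
    and "group_action G X \<phi>"
    and "is_mean X \<mu>"
    and "preserves_mean G X \<phi> \<mu>"
    and "strongly_faithful G X \<phi> \<mu>"
  shows "sofic G"
proof -
  interpret mean_preserving_action G X \<phi> \<mu>
    by (rule mean_preserving_action.intro) (fact assms)+
  show ?thesis
    using soficI[OF group.is_monoid[OF assms(1)] sofic_approximation_exists[OF assms(3,7)]] .
qed

end
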